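(* Let $X$ be an infinite-dimensional real Hilbert space, and let $u$, $(d_n)$, $(t_n)$, $(\rho_n)$, $\rho_\infty$, $(x_n)$ be as in the context. Set $C := \overline{\mathrm{conv}}\{x_n : n\ge 2\}$. Then there exists a firmly nonexpansive operator $T\colon X\to X$ such that $\overline{\mathrm{ran}}\, T = C$, $\mathrm{Fix}\, T = \{0\}$, $T x_n = x_{n+1}$ for every $n\ge 1$, and $T^n x_1 \rightharpoonup 0$ (weakly) as $n\to\infty$, while $\inf_{n\ge 1}\|T^n x_1\| = \rho_\infty > 0$.
   Context: Standing setup. $X$ is an infinite-dimensional real Hilbert space with inner product $\langle\cdot,\cdot\rangle$. $u\colon [0,\infty)\to X$ is a curve satisfying $\langle u(s),u(t)\rangle = \exp(-(s-t)^2)$ for all $s,t\ge 0$ (in particular each $u(t)$ is a unit vector). $(d_n)_{n\ge1}$ is a sequence of reals with $d_n>0$ for all $n$, $\sum_{k=1}^\infty d_k^2<\infty$, $t_n := \sum_{k=1}^{n-1} d_k \to +\infty$ (so $t_1=0$ and $t_{n+1}-t_n=d_n$), $d_1\le 1/8$, and $d_{n+1}\le d_n/(1+64 d_n^2)$ for all $n\ge1$. Define $\rho_1:=1$, $\rho_{n+1}:=\rho_n\exp(-d_n^2)$, $\rho_\infty := \exp(-\sum_{k=1}^\infty d_k^2)$, and $x_n := \rho_n u(t_n)$ for $n\ge 1$. An operator $T\colon X\to X$ is firmly nonexpansive if $\|Tx-Ty\|^2\le\langle x-y,Tx-Ty\rangle$ for all $x,y\in X$; $\mathrm{Fix}\,T$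 denotes its fixed point set, $\overline{\mathrm{ran}}\,T$ the closure of its range, and $\overline{\mathrm{conv}}$ the closed convex hull. *)

theory Defs
  imports "HOL-Analysis.Analysis"
begin

definition firmly_nonexpansive :: "('a::real_inner \<Rightarrow> 'a) \<Rightarrow> bool" where
  "firmly_nonexpansive T \<longleftrightarrow>
     (\<forall>x y. (norm (T x - T y))\<^sup>2 \<le> inner (x - y) (T x - T y))"

definition weakly_tendsto :: "(nat \<Rightarrow> 'a::real_inner) \<Rightarrow> 'a \<Rightarrow> bool" where
  "weakly_tendsto f l \<longleftrightarrow> (\<forall>y. (\<lambda>n. inner (f n) y) \<longlonglongrightarrow> inner l y)"

definition infinite_dimensional :: "'a::real_vector itself \<Rightarrow> bool" where
  "infinite_dimensional _ \<longleftrightarrow> (\<forall>B::'a set. finite B \<longrightarrow> span B \<noteq> UNIV)"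

end

theory Submission
  imports Defs
begin

(* The orbit prescribes the graph {(x (k + 1), x k - x (k + 1))} \<union> {(0, 0)} of T\<^sup>-\<^sup>1 - I.
   Consecutive points of the orbit are related through a Gaussian kernel, and the steps d n shrink
   fast enough that this graph is monotone; adding the normal cone of C keeps it monotone.
   By Minty's theorem (obtained from a finite Kirszbraun lemma and a finite intersection argument
   that replaces weak compactness) it extends to a maximal monotone operator A, and the resolvent
   T = (I + A)\<^sup>-\<^sup>1 is firmly nonexpansive, moves x n to x (n + 1) and maps into C with dense
   range.  The points x n are asymptotically orthogonal, so the orbit converges weakly to 0 while
   its norms \<rho> (n + 1) decrease to \<rho>\<^sub>\<infinity> > 0; the same weak convergence leaves 0 as the only
   fixed point in C. *)

section \<open>Nearest points in Hilbert spaces\<close>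

lemma power2_norm_add:
  fixes a b :: "'a::real_inner"
  shows "(norm (a + b))\<^sup>2 = (norm a)\<^sup>2 + 2 * inner a b + (norm b)\<^sup>2"
  by (simp add: power2_norm_eq_inner algebra_simps inner_commute)

lemma power2_norm_diff:
  fixes a b :: "'a::real_inner"
  shows "(norm (a - b))\<^sup>2 = (norm a)\<^sup>2 - 2 * inner a b + (norm b)\<^sup>2"
  by (simp add: power2_norm_eq_inner algebra_simps inner_commute)

lemma power2_norm_diff_midpoint:
  fixes x a b :: "'a::real_inner"
  shows "(norm (a - b))\<^sup>2 = 2 * (norm (x - a))\<^sup>2 + 2 * (norm (x - b))\<^sup>2 - 4 * (norm (x - midpoint a b))\<^sup>2"
  by (simp add: midpoint_def power2_norm_eq_inner inner_add_left inner_add_right inner_diff_left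
      inner_diff_right inner_commute algebra_simps)

lemma Cauchy_if_dist_le_null:
  fixes f :: "nat \<Rightarrow> 'a::metric_space"
  assumes dist_le: "\<And>m n. m \<le> n \<Longrightarrow> dist (f m) (f n) \<le> g m" and g: "g \<longlonglongrightarrow> 0"
  shows "Cauchy f"
proof (rule metric_CauchyI)
  fix e :: real assume "e > 0"
  then obtain M where M: "\<And>m. m \<ge> M \<Longrightarrow> g m < e"
    using g by (force simp: LIMSEQ_def dist_real_def abs_less_iff)
  have "dist (f m) (f n) < e" if "m \<ge> M" "n \<ge> M" for m n
    using dist_le[of m n] dist_le[of n m] M[of m] M[of n] that
    by (cases "m \<le> n") (auto simp: dist_commute)
  then show "\<exists>M. \<forall>m\<ge>M. \<forall>n\<ge>M. dist (f m) (f n) < e" by blast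
qed

lemma nearest_point_inner_le:
  fixes S :: "'a::real_inner set"
  assumes "convex S" and p: "p \<in> S" and y: "y \<in> S"
    and nearest: "\<And>v. v \<in> S \<Longrightarrow> norm (x - p) \<le> norm (x - v)"
  shows "inner (x - p) (y - p) \<le> 0"
proof (rule ccontr)
  define e where "e = y - p"
  assume "\<not> ?thesis"
  then have pos: "inner (x - p) e > 0" by (simp add: e_def)
  then have "e \<noteq> 0" by auto
  define s where "s = min 1 (inner (x - p) e / (norm e)\<^sup>2)"
  have s: "0 < s" "s \<le> 1" "s * (norm e)\<^sup>2 \<le> inner (x - p) e"
    using pos \<open>e \<noteq> 0\<close> by (auto simp: s_def min_def field_simps)
  have "(1 - s) *\<^sub>R p + s *\<^sub>R y \<in> S"
    using assms(1) p y s by (simp add: convex_def)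
  moreover have "(1 - s) *\<^sub>R p + s *\<^sub>R y = p + s *\<^sub>R e"
    by (simp add: e_def algebra_simps)
  ultimately have "(norm (x - p))\<^sup>2 \<le> (norm ((x - p) - s *\<^sub>R e))\<^sup>2"
    using nearest[of "p + s *\<^sub>R e"] by (simp add: algebra_simps power_mono)
  also have "\<dots> = (norm (x - p))\<^sup>2 - 2 * s * inner (x - p) e + s * (s * (norm e)\<^sup>2)"
    unfolding power2_norm_diff by (simp add: power_mult_distrib power2_eq_square)
  finally have "s * (2 * inner (x - p) e) \<le> s * (s * (norm e)\<^sup>2)"
    by (simp add: algebra_simps del: inner_diff_left inner_diff_right)
  then have "2 * inner (x - p) e \<le> s * (norm e)\<^sup>2"
    using s(1) by (rule mult_left_le_imp_le)
  with s(3) pos show False by linarith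
qed

lemma norm_diff_decreases_towards_nearest_point:
  fixes S :: "'a::real_inner set"
  assumes "convex S" "p \<in> S" "v \<in> S" "p \<noteq> w"
    and nearest: "\<And>v. v \<in> S \<Longrightarrow> norm (w - p) \<le> norm (w - v)"
    and s: "0 < s" "s \<le> 1"
  shows "norm (w + s *\<^sub>R (p - w) - v) < norm (w - v)"
proof -
  define \<delta> where "\<delta> = norm (p - w)"
  have "\<delta> > 0" using \<open>p \<noteq> w\<close> by (simp add: \<delta>_def)
  have "inner (w - v) (p - w) = - \<delta>\<^sup>2 + inner (w - p) (v - p)"
    by (simp add: \<delta>_def power2_norm_eq_inner inner_diff_left inner_diff_right inner_commute)
  then have obtuse: "inner (w - v) (p - w) \<le> - \<delta>\<^sup>2"
    using nearest_point_inner_le[OF assms(1-3) nearest] by linarith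
  have shift: "w + s *\<^sub>R (p - w) - v = (w - v) + s *\<^sub>R (p - w)" by (simp add: algebra_simps)
  have "(norm (w + s *\<^sub>R (p - w) - v))\<^sup>2
      = (norm (w - v))\<^sup>2 + 2 * s * inner (w - v) (p - w) + s\<^sup>2 * \<delta>\<^sup>2"
    unfolding shift power2_norm_add by (simp add: \<delta>_def power_mult_distrib)
  also have "\<dots> \<le> (norm (w - v))\<^sup>2 - 2 * s * \<delta>\<^sup>2 + s * \<delta>\<^sup>2"
  proof -
    have "2 * s * inner (w - v) (p - w) \<le> 2 * s * (- \<delta>\<^sup>2)"
      using obtuse s by (intro mult_left_mono) auto
    moreover have "s\<^sup>2 * \<delta>\<^sup>2 \<le> s * \<delta>\<^sup>2"
      using s by (intro mult_right_mono) (auto simp: power2_eq_square mult_le_cancel_left1)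
    ultimately show ?thesis by linarith
  qed
  also have "\<dots> < (norm (w - v))\<^sup>2" using s \<open>\<delta> > 0\<close> by simp
  finally show ?thesis by (simp add: power_less_imp_less_base)
qed

lemma nearest_point_exists:
  fixes S :: "'a::{real_inner,complete_space} set"
  assumes "closed S" "convex S" "S \<noteq> {}"
  shows "\<exists>p\<in>S. \<forall>v\<in>S. norm (x - p) \<le> norm (x - v)"
proof -
  define D where "D = (INF v\<in>S. (norm (x - v))\<^sup>2)"
  have bdd: "bdd_below ((\<lambda>v. (norm (x - v))\<^sup>2) ` S)" by (rule bdd_belowI[of _ 0]) auto
  have D_le: "D \<le> (norm (x - v))\<^sup>2" if "v \<in> S" for v
    unfolding D_def using bdd that by (rule cINF_lower)
  have "\<exists>y\<in>S. (norm (x - y))\<^sup>2 < D + 1 / Suc k" for k :: nat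
  proof -
    have "(INF v\<in>S. (norm (x - v))\<^sup>2) < D + 1 / Suc k" unfolding D_def[symmetric] by simp
    then show ?thesis by (simp only: cINF_less_iff[OF \<open>S \<noteq> {}\<close> bdd])
  qed
  then obtain y where y: "\<And>k. y k \<in> S" and y_D: "\<And>k. (norm (x - y k))\<^sup>2 < D + 1 / Suc k"
    by metis
  have "(norm (y m - y n))\<^sup>2 \<le> 4 / Suc m" if "m \<le> n" for m n
  proof -
    have "midpoint (y m) (y n) \<in> S"
      using \<open>convex S\<close> y by (auto simp: midpoint_def scaleR_right_distrib intro: convexD)
    then have "D \<le> (norm (x - midpoint (y m) (y n)))\<^sup>2" by (rule D_le)
    moreover have "2 / real (Suc n) \<le> 2 / Suc m" using that by (intro divide_left_mono) auto
    ultimately show ?thesis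
      using power2_norm_diff_midpoint[of "y m" "y n" x] y_D[of m] y_D[of n] by simp
  qed
  then have "dist (y m) (y n) \<le> sqrt (4 / Suc m)" if "m \<le> n" for m n
    using that by (simp add: dist_norm real_le_rsqrt)
  moreover have "(\<lambda>m. sqrt (4 / Suc m)) \<longlonglongrightarrow> 0"
    using tendsto_real_sqrt[OF tendsto_mult_right_zero[OF LIMSEQ_inverse_real_of_nat, of 4]]
    by (simp add: divide_inverse)
  ultimately have "Cauchy y" by (rule Cauchy_if_dist_le_null)
  then obtain p where lim: "y \<longlonglongrightarrow> p" using Cauchy_convergent_iff convergent_def by blast
  have "p \<in> S" using closed_sequentially[OF \<open>closed S\<close>] y lim by blast
  have "(\<lambda>k. (norm (x - y k))\<^sup>2) \<longlonglongrightarrow> (norm (x - p))\<^sup>2"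
    by (intro tendsto_intros lim)
  moreover have "(\<lambda>k. D + 1 / Suc k) \<longlonglongrightarrow> D"
    using tendsto_add[OF tendsto_const LIMSEQ_inverse_real_of_nat] by (simp add: inverse_eq_divide)
  ultimately have "(norm (x - p))\<^sup>2 \<le> D"
    using y_D by (intro LIMSEQ_le) (auto intro: less_imp_le)
  then have "norm (x - p) \<le> norm (x - v)" if "v \<in> S" for v
    using D_le[OF that] by (rule power2_le_imp_le[OF order_trans]) auto
  with \<open>p \<in> S\<close> show ?thesis by blast
qed

lemma min_norm_point_exists:
  fixes S :: "'a::{real_inner,complete_space} set"
  assumes "closed S" "convex S" "S \<noteq> {}"
  shows "\<exists>p\<in>S. \<forall>v\<in>S. norm p \<le> norm v"
  using nearest_point_exists[OF assms, of 0] by simp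

lemma min_norm_point_dist_sq:
  fixes S :: "'a::real_inner set"
  assumes "convex S" "p \<in> S" "v \<in> S" and min: "\<And>v. v \<in> S \<Longrightarrow> norm p \<le> norm v"
  shows "(norm (v - p))\<^sup>2 \<le> (norm v)\<^sup>2 - (norm p)\<^sup>2"
proof -
  have "inner p (v - p) \<ge> 0"
    using nearest_point_inner_le[OF assms(1-3), of 0] min by simp
  moreover have "(norm v)\<^sup>2 = (norm p)\<^sup>2 + 2 * inner p (v - p) + (norm (v - p))\<^sup>2"
    using power2_norm_add[of p "v - p"] by simp
  ultimately show ?thesis by linarith
qed

lemma Inter_nonempty_if_approximated:
  fixes w :: "nat \<Rightarrow> 'a::complete_space"
  assumes closed: "\<And>S. S \<in> F \<Longrightarrow> closed S"
    and near: "\<And>S k. S \<in> F \<Longrightarrow> \<exists>v\<in>S. dist (w k) v \<le> e k"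
    and close: "\<And>k l. k \<le> l \<Longrightarrow> dist (w k) (w l) \<le> e k"
    and e: "e \<longlonglongrightarrow> 0"
  shows "\<Inter>F \<noteq> {}"
proof -
  have "Cauchy w" using close e by (rule Cauchy_if_dist_le_null)
  then obtain w0 where w: "w \<longlonglongrightarrow> w0" using Cauchy_convergent_iff convergent_def by blast
  have "w0 \<in> S" if S: "S \<in> F" for S
  proof -
    obtain v where v: "\<And>k. v k \<in> S" and v_near: "\<And>k. dist (w k) (v k) \<le> e k"
      using near[OF S] by metis
    have lim: "(\<lambda>k. e k + dist (w k) w0) \<longlonglongrightarrow> 0"
      using tendsto_add[OF e tendsto_dist_iff[THEN iffD1, OF w]] by (simp only: add_0_left)
    have "norm (dist (v k) w0) \<le> e k + dist (w k) w0" for k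
      using dist_triangle[of "v k" w0 "w k"] v_near[of k] by (simp add: dist_commute)
    then have "(\<lambda>k. dist (v k) w0) \<longlonglongrightarrow> 0"
      by (intro Lim_null_comparison[OF always_eventually lim] allI)
    then have "v \<longlonglongrightarrow> w0" by (rule tendsto_dist_iff[THEN iffD2])
    then show ?thesis using closed_sequentially[OF closed[OF S]] v by blast
  qed
  then show ?thesis by blast
qed

lemma finite_subfamily_chain_approx_SUP:
  fixes f :: "'a set \<Rightarrow> real"
  assumes mono: "\<And>G G'. finite G' \<Longrightarrow> G' \<subseteq> F \<Longrightarrow> G \<subseteq> G' \<Longrightarrow> f G \<le> f G'"
    and bounded: "\<And>G. finite G \<Longrightarrow> G \<subseteq> F \<Longrightarrow> f G \<le> B"
  obtains H where "\<And>k. finite (H k)" "\<And>k. H k \<subseteq> F" "\<And>k l. k \<le> l \<Longrightarrow> H k \<subseteq> H l"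
    and "\<And>G k. finite G \<Longrightarrow> G \<subseteq> F \<Longrightarrow> f G < f (H k) + 1 / Suc k"
proof -
  define \<G> where "\<G> = {G. finite G \<and> G \<subseteq> F}"
  define m where "m = (SUP G\<in>\<G>. f G)"
  have "{} \<in> \<G>" by (simp add: \<G>_def)
  have bdd: "bdd_above (f ` \<G>)" using bounded by (intro bdd_aboveI2[where M = B]) (auto simp: \<G>_def)
  have "\<exists>G\<in>\<G>. m - 1 / Suc k < f G" for k :: nat
  proof -
    have "m - 1 / Suc k < (SUP G\<in>\<G>. f G)" by (simp add: m_def)
    then show ?thesis using less_cSUP_iff[OF _ bdd] \<open>{} \<in> \<G>\<close> by blast
  qed
  then obtain Gs where Gs: "\<And>k. Gs k \<in> \<G>" and Gs_m: "\<And>k. m - 1 / Suc k < f (Gs k)" by metis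
  define H where "H k = (\<Union>j\<le>k. Gs j)" for k
  have H: "finite (H k)" "H k \<subseteq> F" for k using Gs by (auto simp: H_def \<G>_def)
  show thesis
  proof
    show "H k \<subseteq> H l" if "k \<le> l" for k l unfolding H_def using that by (intro UN_mono) auto
    show "f G < f (H k) + 1 / Suc k" if "finite G" "G \<subseteq> F" for G k
    proof -
      have "f G \<le> m" unfolding m_def using bdd that by (intro cSUP_upper2) (auto simp: \<G>_def)
      moreover have "f (Gs k) \<le> f (H k)"
        using mono[OF H(1,2)] by (auto simp: H_def)
      ultimately show ?thesis using Gs_m[of k] by linarith
    qed
  qed (use H in auto)
qed

definition min_norm_point :: "'a::real_inner set \<Rightarrow> 'a" where
  "min_norm_point S = (SOME p. p \<in> S \<and> (\<forall>v\<in>S. norm p \<le> norm v))"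

lemma min_norm_point:
  fixes S :: "'a::{real_inner,complete_space} set"
  assumes "closed S" "convex S" "S \<noteq> {}"
  shows "min_norm_point S \<in> S" "\<And>v. v \<in> S \<Longrightarrow> norm (min_norm_point S) \<le> norm v"
  using someI_ex[OF min_norm_point_exists[OF assms, unfolded Bex_def]]
  unfolding min_norm_point_def by blast+

text \<open>A substitute for the weak compactness of bounded closed convex sets: the minimum-norm
  points of the finite intersections converge, by the Pythagorean estimate for minimum-norm
  points, along a chain on which their norms approach their supremum.\<close>

lemma Inter_closed_convex_nonempty:
  fixes F :: "'a::{real_inner,complete_space} set set"
  assumes cc: "\<And>S. S \<in> F \<Longrightarrow> closed S \<and> convex S"
    and S0: "S0 \<in> F" and bounded: "\<And>y. y \<in> S0 \<Longrightarrow> norm y \<le> B"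
    and finite_Inter: "\<And>G. finite G \<Longrightarrow> G \<subseteq> F \<Longrightarrow> \<Inter>G \<noteq> {}"
  shows "\<Inter>F \<noteq> {}"
proof -
  define mp where "mp G = min_norm_point (\<Inter>G)" for G :: "'a set set"
  have mp: "mp G \<in> \<Inter>G" "\<And>v. v \<in> \<Inter>G \<Longrightarrow> norm (mp G) \<le> norm v" if "finite G" "G \<subseteq> F" for G
    unfolding mp_def using cc that finite_Inter[OF that]
    by (intro min_norm_point closed_Inter convex_Inter; force)+
  have mono: "norm (mp G) \<le> norm (mp G')" if "finite G'" "G' \<subseteq> F" "G \<subseteq> G'" for G G'
  proof -
    have "finite G" "G \<subseteq> F" using that finite_subset by auto
    moreover have "mp G' \<in> \<Inter>G" using mp(1)[OF that(1,2)] that(3) by auto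
    ultimately show ?thesis using mp(2) by blast
  qed
  have mp_le_B: "norm (mp G) \<le> B" if "finite G" "G \<subseteq> F" for G
    using mono[of "insert S0 G" G] mp(1)[of "insert S0 G"] bounded that S0 by force
  then obtain H where H: "\<And>k. finite (H k)" "\<And>k. H k \<subseteq> F" "\<And>k l. k \<le> l \<Longrightarrow> H k \<subseteq> H l"
    and H_approx: "\<And>G k. finite G \<Longrightarrow> G \<subseteq> F \<Longrightarrow> norm (mp G) < norm (mp (H k)) + 1 / Suc k"
    using finite_subfamily_chain_approx_SUP[of F "\<lambda>G. norm (mp G)"] mono by metis
  have "B \<ge> 0" using order_trans[OF norm_ge_zero mp_le_B[of "{}"]] by simp
  have close: "norm (mp G - mp (H k)) \<le> sqrt (2 * B / Suc k)"
    if "finite G" "G \<subseteq> F" "H k \<subseteq> G" for G k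
  proof -
    have "mp G \<in> \<Inter>(H k)" using mp(1)[OF that(1,2)] that(3) by auto
    then have "(norm (mp G - mp (H k)))\<^sup>2 \<le> (norm (mp G))\<^sup>2 - (norm (mp (H k)))\<^sup>2"
      using min_norm_point_dist_sq[of "\<Inter>(H k)"] mp[OF H(1,2)] cc H(2)[of k]
      by (metis convex_Inter subsetD)
    also have "\<dots> = (norm (mp G) - norm (mp (H k))) * (norm (mp G) + norm (mp (H k)))"
      by (simp add: power2_eq_square algebra_simps)
    also have "\<dots> \<le> (1 / Suc k) * (2 * B)"
      using H_approx[OF that(1,2), of k] mono[OF that] mp_le_B
        that H(1,2)[of k] by (intro mult_mono) force+
    finally show ?thesis by (simp add: real_le_rsqrt)
  qed
  show ?thesis
  proof (rule Inter_nonempty_if_approximated)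
    show "closed S" if "S \<in> F" for S using cc that by blast
    show "\<exists>v\<in>S. dist (mp (H k)) v \<le> sqrt (2 * B / Suc k)" if "S \<in> F" for S k
      using that mp(1)[of "insert S (H k)"] close[of "insert S (H k)" k] H(1,2)[of k]
      by (intro bexI[of _ "mp (insert S (H k))"]) (auto simp: dist_norm norm_minus_commute)
    show "dist (mp (H k)) (mp (H l)) \<le> sqrt (2 * B / Suc k)" if "k \<le> l" for k l
      using close[OF H(1,2) H(3)[OF that]] by (simp add: dist_norm norm_minus_commute)
    show "(\<lambda>k. sqrt (2 * B / Suc k)) \<longlonglongrightarrow> 0"
      using tendsto_real_sqrt[OF tendsto_mult_right_zero[OF LIMSEQ_inverse_real_of_nat, of "2 * B"]]
      by (simp add: divide_inverse)
  qed
qed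

section \<open>A finite Kirszbraun lemma\<close>

lemma continuous_on_Max_finite:
  fixes f :: "'i \<Rightarrow> 'a::topological_space \<Rightarrow> real"
  assumes "finite I" "I \<noteq> {}" "\<And>i. i \<in> I \<Longrightarrow> continuous_on S (f i)"
  shows "continuous_on S (\<lambda>x. MAX i\<in>I. f i x)"
  using assms
proof (induction I rule: finite_ne_induct)
  case (insert i I)
  then have "continuous_on S (\<lambda>x. max (f i x) (MAX i\<in>I. f i x))"
    by (intro continuous_on_max) auto
  with insert show ?case by simp
qed simp

lemma convex_comb_pairwise_dist_sq:
  fixes p :: "'i \<Rightarrow> 'a::real_inner"
  assumes "finite I" and "sum c I = 1"
  shows "(\<Sum>i\<in>I. \<Sum>j\<in>I. c i * c j * (norm (p i - p j))\<^sup>2)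
       = 2 * (\<Sum>i\<in>I. c i * (norm (q - p i))\<^sup>2) - 2 * (norm (q - (\<Sum>i\<in>I. c i *\<^sub>R p i)))\<^sup>2"
proof -
  define e where "e i = q - p i" for i
  have pd: "(norm (p i - p j))\<^sup>2 = (norm (e i))\<^sup>2 + (norm (e j))\<^sup>2 - 2 * inner (e i) (e j)" for i j
    using power2_norm_diff[of "e j" "e i"] by (simp add: e_def inner_commute)
  have "c i * c j * (norm (p i - p j))\<^sup>2 = c i * c j * (norm (e i))\<^sup>2
      + c i * c j * (norm (e j))\<^sup>2 - 2 * (c i * c j * inner (e i) (e j))" for i j
    unfolding pd by (simp add: algebra_simps)
  then have "(\<Sum>i\<in>I. \<Sum>j\<in>I. c i * c j * (norm (p i - p j))\<^sup>2)
      = (\<Sum>i\<in>I. \<Sum>j\<in>I. c i * c j * (norm (e i))\<^sup>2)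
        + (\<Sum>i\<in>I. \<Sum>j\<in>I. c i * c j * (norm (e j))\<^sup>2)
        - 2 * (\<Sum>i\<in>I. \<Sum>j\<in>I. c i * c j * inner (e i) (e j))"
    by (simp only: sum_subtractf sum.distrib sum_distrib_left)
  also have "(\<Sum>i\<in>I. \<Sum>j\<in>I. c i * c j * (norm (e i))\<^sup>2) = (\<Sum>i\<in>I. c i * (norm (e i))\<^sup>2)"
    using assms(2) by (simp add: mult.commute mult.left_commute flip: sum_distrib_left sum_distrib_right)
  also have "(\<Sum>i\<in>I. \<Sum>j\<in>I. c i * c j * (norm (e j))\<^sup>2) = (\<Sum>i\<in>I. c i * (\<Sum>j\<in>I. c j * (norm (e j))\<^sup>2))"
    by (simp add: sum_distrib_left mult.assoc)
  also have "\<dots> = (\<Sum>j\<in>I. c j * (norm (e j))\<^sup>2)"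
    using assms(2) by (simp flip: sum_distrib_right)
  also have "(\<Sum>i\<in>I. \<Sum>j\<in>I. c i * c j * inner (e i) (e j)) = (norm (\<Sum>i\<in>I. c i *\<^sub>R e i))\<^sup>2"
    by (simp only: power2_norm_eq_inner inner_sum_left) (simp add: inner_sum_right sum_distrib_left mult_ac)
  also have "(\<Sum>i\<in>I. c i *\<^sub>R e i) = q - (\<Sum>i\<in>I. c i *\<^sub>R p i)"
    using assms(2) by (simp add: e_def scaleR_right_diff_distrib sum_subtractf flip: scaleR_left.sum)
  finally show ?thesis using assms(2) by (simp add: e_def)
qed

lemma convex_hull_image_weights:
  fixes y :: "'i \<Rightarrow> 'a::real_vector"
  assumes "finite J" "w \<in> convex hull (y ` J)"
  obtains c where "\<And>i. i \<in> J \<Longrightarrow> c i \<ge> 0" "sum c J = 1" "w = (\<Sum>i\<in>J. c i *\<^sub>R y i)"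
proof -
  have "convex hull (\<Union>i\<in>J. {y i}) = {\<Sum>i\<in>J. c i *\<^sub>R s i |c s.
      (\<forall>i\<in>J. 0 \<le> c i) \<and> sum c J = 1 \<and> (\<forall>i\<in>J. s i \<in> {y i})}"
    using \<open>finite J\<close> by (intro convex_hull_finite_union) auto
  moreover have "y ` J = (\<Union>i\<in>J. {y i})" by auto
  ultimately have "\<exists>c s. w = (\<Sum>i\<in>J. c i *\<^sub>R s i) \<and> (\<forall>i\<in>J. 0 \<le> c i) \<and> sum c J = 1
      \<and> (\<forall>i\<in>J. s i \<in> {y i})"
    using assms(2) by (simp only: mem_Collect_eq)
  then obtain c s where c: "\<And>i. i \<in> J \<Longrightarrow> c i \<ge> 0" "sum c J = 1"
    and s: "\<And>i. i \<in> J \<Longrightarrow> s i = y i" and w: "w = (\<Sum>i\<in>J. c i *\<^sub>R s i)"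
    by blast
  have "w = (\<Sum>i\<in>J. c i *\<^sub>R y i)" using s w by simp
  with c show thesis by (intro that[of c]) auto
qed

text \<open>The finite core of Kirszbraun's theorem: the weighted sum of squared distances from a
  barycentre is controlled by the pairwise distances, which the nonexpansive correspondence
  \<open>a i \<mapsto> y i\<close> can only decrease.\<close>

lemma hull_point_not_farther:
  fixes a y :: "'i \<Rightarrow> 'a::real_inner"
  assumes "finite J"
    and nonexp: "\<And>i j. i \<in> J \<Longrightarrow> j \<in> J \<Longrightarrow> norm (y i - y j) \<le> norm (a i - a j)"
    and w: "w \<in> convex hull (y ` J)"
  shows "\<exists>i\<in>J. norm (w - y i) \<le> norm (z - a i)"
proof (rule ccontr)
  assume "\<not> ?thesis"
  then have far: "\<And>i. i \<in> J \<Longrightarrow> norm (z - a i) < norm (w - y i)" by (simp add: not_le)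
  obtain c where c0: "\<And>i. i \<in> J \<Longrightarrow> c i \<ge> 0" and c1: "sum c J = 1"
    and w_eq: "w = (\<Sum>i\<in>J. c i *\<^sub>R y i)"
    using convex_hull_image_weights[OF \<open>finite J\<close> w] by blast
  have "(\<Sum>i\<in>J. \<Sum>j\<in>J. c i * c j * (norm (y i - y j))\<^sup>2)
      \<le> (\<Sum>i\<in>J. \<Sum>j\<in>J. c i * c j * (norm (a i - a j))\<^sup>2)"
    using nonexp c0 by (intro sum_mono mult_left_mono power_mono) auto
  moreover have "(\<Sum>i\<in>J. \<Sum>j\<in>J. c i * c j * (norm (y i - y j))\<^sup>2)
      = 2 * (\<Sum>i\<in>J. c i * (norm (w - y i))\<^sup>2)"
    using convex_comb_pairwise_dist_sq[OF \<open>finite J\<close> c1, of y w] w_eq by simp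
  moreover have "(\<Sum>i\<in>J. \<Sum>j\<in>J. c i * c j * (norm (a i - a j))\<^sup>2)
      \<le> 2 * (\<Sum>i\<in>J. c i * (norm (z - a i))\<^sup>2)"
    using convex_comb_pairwise_dist_sq[OF \<open>finite J\<close> c1, of a z] by simp
  ultimately have near: "(\<Sum>i\<in>J. c i * (norm (w - y i))\<^sup>2) \<le> (\<Sum>i\<in>J. c i * (norm (z - a i))\<^sup>2)"
    by linarith
  obtain i where i: "i \<in> J" "c i > 0"
    using c0 c1 by (metis less_eq_real_def sum.neutral zero_neq_one)
  have "\<forall>j\<in>J. c j * (norm (z - a j))\<^sup>2 \<le> c j * (norm (w - y j))\<^sup>2"
  proof
    fix j assume "j \<in> J"
    then show "c j * (norm (z - a j))\<^sup>2 \<le> c j * (norm (w - y j))\<^sup>2"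
      using c0[of j] far[of j] by (intro mult_left_mono power_mono) auto
  qed
  moreover have "\<exists>j\<in>J. c j * (norm (z - a j))\<^sup>2 < c j * (norm (w - y j))\<^sup>2"
    using i far[of i] by (intro bexI[of _ i] mult_strict_left_mono power_strict_mono) auto
  ultimately have "(\<Sum>j\<in>J. c j * (norm (z - a j))\<^sup>2) < (\<Sum>j\<in>J. c j * (norm (w - y j))\<^sup>2)"
    using \<open>finite J\<close> by (intro sum_strict_mono_ex1)
  with near show False by linarith
qed

lemma finite_strict_ineqs_persist_at_right:
  fixes f :: "'i \<Rightarrow> real \<Rightarrow> real"
  assumes "finite I" "\<And>i. i \<in> I \<Longrightarrow> continuous_on UNIV (f i)" "\<And>i. i \<in> I \<Longrightarrow> f i 0 < \<mu>"
  obtains s where "0 < s" "s \<le> 1" "\<And>i. i \<in> I \<Longrightarrow> f i s < \<mu>"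
proof -
  have "\<forall>\<^sub>F s in at_right 0. f i s < \<mu>" if "i \<in> I" for i
  proof (rule order_tendstoD(2)[OF _ assms(3)[OF that]])
    show "(f i \<longlongrightarrow> f i 0) (at_right 0)"
      using assms(2)[OF that] unfolding continuous_on_def by (auto intro: tendsto_within_subset)
  qed
  then have "\<forall>\<^sub>F s in at_right 0. \<forall>i\<in>I. f i s < \<mu>"
    using \<open>finite I\<close> by (intro eventually_ball_finite) auto
  moreover have "\<forall>\<^sub>F s in at_right (0::real). 0 < s" by (simp add: eventually_at_right_less)
  moreover have "\<forall>\<^sub>F s in at_right (0::real). s \<le> 1"
    unfolding eventually_at_right_field by (intro exI[of _ 1]) auto
  ultimately have "\<forall>\<^sub>F s in at_right 0. 0 < s \<and> s \<le> 1 \<and> (\<forall>i\<in>I. f i s < \<mu>)"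
    by eventually_elim blast
  then show thesis
    using that eventually_happens'[OF trivial_limit_at_right_real] by blast
qed

text \<open>Otherwise, moving \<open>w0\<close> towards the convex hull of the active points decreases all active
  weighted distances, while the inactive ones stay below the maximum.\<close>

lemma minimax_point_in_active_hull:
  fixes y :: "'i \<Rightarrow> 'a::real_inner"
  assumes "finite I" and r: "\<And>i. i \<in> I \<Longrightarrow> r i > 0"
    and K: "convex K" "y ` I \<subseteq> K" "w0 \<in> K"
    and max_w0: "\<And>i. i \<in> I \<Longrightarrow> norm (w0 - y i) / r i \<le> \<mu>"
    and minimal: "\<And>w. w \<in> K \<Longrightarrow> \<exists>i\<in>I. \<mu> \<le> norm (w - y i) / r i"
  shows "w0 \<in> convex hull (y ` {i\<in>I. norm (w0 - y i) / r i = \<mu>})"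
proof (rule ccontr)
  define J where "J = {i\<in>I. norm (w0 - y i) / r i = \<mu>}"
  define H where "H = convex hull (y ` J)"
  assume "w0 \<notin> convex hull (y ` {i\<in>I. norm (w0 - y i) / r i = \<mu>})"
  then have "w0 \<notin> H" by (simp add: H_def J_def)
  have "J \<noteq> {}" using minimal[OF \<open>w0 \<in> K\<close>] max_w0 by (force simp: J_def)
  then have "compact H" "H \<noteq> {}"
    using \<open>finite I\<close> by (auto simp: H_def J_def intro!: finite_imp_compact_convex_hull)
  moreover have "continuous_on H (\<lambda>v. norm (w0 - v))" by (intro continuous_intros)
  ultimately have "\<exists>p\<in>H. \<forall>v\<in>H. norm (w0 - p) \<le> norm (w0 - v)" by (rule continuous_attains_inf)
  then obtain p where "p \<in> H" and p_nearest: "\<And>v. v \<in> H \<Longrightarrow> norm (w0 - p) \<le> norm (w0 - v)"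
    by blast
  define ws where "ws s = w0 + s *\<^sub>R (p - w0)" for s :: real
  have active: "norm (ws s - y i) / r i < \<mu>" if "i \<in> J" "0 < s" "s \<le> 1" for i s
  proof -
    have "norm (ws s - y i) < norm (w0 - y i)"
      unfolding ws_def using \<open>p \<in> H\<close> \<open>w0 \<notin> H\<close> that p_nearest
      by (intro norm_diff_decreases_towards_nearest_point[of H]) (auto simp: H_def intro: hull_inc)
    then show ?thesis using that r[of i] by (auto simp: J_def divide_strict_right_mono)
  qed
  obtain s where s: "0 < s" "s \<le> 1" and "\<And>i. i \<in> I - J \<Longrightarrow> norm (ws s - y i) / r i < \<mu>"
  proof (rule finite_strict_ineqs_persist_at_right[of "I - J" "\<lambda>i s. norm (ws s - y i) / r i"])
    show "continuous_on UNIV (\<lambda>s. norm (ws s - y i) / r i)" if "i \<in> I - J" for i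
      unfolding ws_def using r[of i] that by (intro continuous_intros) auto
    show "norm (ws 0 - y i) / r i < \<mu>" if "i \<in> I - J" for i
      using max_w0[of i] that by (auto simp: ws_def J_def)
  qed (use \<open>finite I\<close> in auto)
  with active have "\<forall>i\<in>I. norm (ws s - y i) / r i < \<mu>" by (auto simp: J_def)
  moreover have "ws s \<in> K"
  proof -
    have "H \<subseteq> K" unfolding H_def J_def using K(1,2) by (intro hull_minimal) auto
    then have "p \<in> K" using \<open>p \<in> H\<close> by blast
    then have "(1 - s) *\<^sub>R w0 + s *\<^sub>R p \<in> K" using K s by (intro convexD) auto
    then show ?thesis by (simp add: ws_def algebra_simps)
  qed
  ultimately show False using minimal by force
qed

lemma kirszbraun_finite:
  fixes a y :: "'i \<Rightarrow> 'a::real_inner"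
  assumes "finite I"
    and nonexp: "\<And>i j. i \<in> I \<Longrightarrow> j \<in> I \<Longrightarrow> norm (y i - y j) \<le> norm (a i - a j)"
  shows "\<exists>w. \<forall>i\<in>I. norm (w - y i) \<le> norm (z - a i)"
proof (cases "I = {} \<or> z \<in> a ` I")
  case True
  then show ?thesis using nonexp by auto
next
  case False
  define r where "r i = norm (z - a i)" for i
  have r: "r i > 0" if "i \<in> I" for i using False that by (auto simp: r_def)
  define \<Phi> where "\<Phi> w = (MAX i\<in>I. norm (w - y i) / r i)" for w
  define K where "K = convex hull (y ` I)"
  have "compact K" "K \<noteq> {}" using \<open>finite I\<close> False by (auto simp: K_def finite_imp_compact_convex_hull)
  moreover have "continuous_on K \<Phi>"
    unfolding \<Phi>_def using \<open>finite I\<close> False r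
    by (intro continuous_on_Max_finite continuous_intros) (auto dest: r)
  ultimately have "\<exists>w0\<in>K. \<forall>w\<in>K. \<Phi> w0 \<le> \<Phi> w" by (rule continuous_attains_inf)
  then obtain w0 where "w0 \<in> K" and w0_min: "\<And>w. w \<in> K \<Longrightarrow> \<Phi> w0 \<le> \<Phi> w"
    by blast
  have le_\<Phi>: "norm (w - y i) / r i \<le> \<Phi> w" if "i \<in> I" for w i
    unfolding \<Phi>_def using \<open>finite I\<close> that by (intro Max_ge) auto
  have "\<exists>i\<in>I. \<Phi> w0 \<le> norm (w - y i) / r i" if "w \<in> K" for w
  proof -
    have "\<Phi> w \<in> (\<lambda>i. norm (w - y i) / r i) ` I"
      unfolding \<Phi>_def using \<open>finite I\<close> False by (intro Max_in) auto
    then show ?thesis using w0_min[OF that] by force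
  qed
  then have "w0 \<in> convex hull (y ` {i\<in>I. norm (w0 - y i) / r i = \<Phi> w0})"
    using \<open>finite I\<close> r le_\<Phi> \<open>w0 \<in> K\<close>
    by (intro minimax_point_in_active_hull) (auto simp: K_def hull_subset[THEN subsetD])
  then obtain i where i: "i \<in> I" and "norm (w0 - y i) / r i = \<Phi> w0" "norm (w0 - y i) \<le> r i"
    using hull_point_not_farther[of "{i\<in>I. norm (w0 - y i) / r i = \<Phi> w0}" y a w0 z]
      \<open>finite I\<close> nonexp by (auto simp: r_def)
  then have "\<Phi> w0 \<le> 1" using r[OF i] by (metis divide_le_eq_1_pos)
  then have "norm (w0 - y i) \<le> r i" if "i \<in> I" for i
    using le_\<Phi>[OF that, of w0] r[OF that] divide_le_eq_1_pos by fastforce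
  then show ?thesis by (auto simp: r_def)
qed

section \<open>Monotone sets and their resolvents\<close>

definition monotone_set :: "('a::real_inner \<times> 'a) set \<Rightarrow> bool" where
  "monotone_set M \<longleftrightarrow> (\<forall>(a, a')\<in>M. \<forall>(b, b')\<in>M. inner (a - b) (a' - b') \<ge> 0)"

lemma monotone_setD:
  "monotone_set M \<Longrightarrow> (a, a') \<in> M \<Longrightarrow> (b, b') \<in> M \<Longrightarrow> inner (a - b) (a' - b') \<ge> 0"
  unfolding monotone_set_def by blast

lemma monotone_setI:
  "(\<And>a a' b b'. (a, a') \<in> M \<Longrightarrow> (b, b') \<in> M \<Longrightarrow> inner (a - b) (a' - b') \<ge> 0) \<Longrightarrow> monotone_set M"
  unfolding monotone_set_def by blast

lemma monotone_set_insert: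
  assumes "monotone_set M" and new: "\<And>b b'. (b, b') \<in> M \<Longrightarrow> inner (a - b) (a' - b') \<ge> 0"
  shows "monotone_set (insert (a, a') M)"
proof (rule monotone_setI)
  have swap: "inner (b - a) (b' - a') = inner (a - b) (a' - b')" for b b'
    by (simp add: inner_diff_left inner_diff_right)
  fix c c' d d' assume "(c, c') \<in> insert (a, a') M" "(d, d') \<in> insert (a, a') M"
  then show "inner (c - d) (c' - d') \<ge> 0"
    using monotone_setD[OF \<open>monotone_set M\<close>] new swap by auto
qed

lemma monotone_set_cayley_nonexpansive:
  assumes "monotone_set M" "(a, a') \<in> M" "(b, b') \<in> M"
  shows "norm ((a - a') - (b - b')) \<le> norm ((a + a') - (b + b'))"
proof -
  define D E where "D = a - b" and "E = a' - b'"
  have "inner D E \<ge> 0" using monotone_setD[OF assms] by (simp add: D_def E_def)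
  then have "(norm (D - E))\<^sup>2 \<le> (norm (D + E))\<^sup>2" by (simp add: power2_norm_diff power2_norm_add)
  then have "norm (D - E) \<le> norm (D + E)" by (simp add: power_mono_iff)
  then show ?thesis by (simp add: D_def E_def algebra_simps)
qed

text \<open>By polarisation, \<open>4 \<langle>u, v\<rangle> = \<parallel>u + v\<parallel>\<^sup>2 - \<parallel>u - v\<parallel>\<^sup>2\<close>.\<close>

lemma resolvent_constraint_eq_cball:
  fixes w b b' z :: "'a::real_inner"
  shows "{w. inner (w - b) (z - w - b') \<ge> 0}
    = cball ((1/2) *\<^sub>R (z + (b - b'))) (norm (z - (b + b')) / 2)"
proof -
  have polar: "inner (w - b) (z - w - b')
      = ((norm (z - (b + b')))\<^sup>2 - (norm (2 *\<^sub>R w - z - (b - b')))\<^sup>2) / 4" for w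
    by (simp add: power2_norm_eq_inner inner_diff_left inner_diff_right inner_add_left
        inner_add_right inner_commute algebra_simps)
  have "inner (w - b) (z - w - b') \<ge> 0 \<longleftrightarrow> norm (2 *\<^sub>R w - z - (b - b')) \<le> norm (z - (b + b'))"
    for w
    unfolding polar by (simp add: power_mono_iff)
  moreover have "2 *\<^sub>R w - z - (b - b') = 2 *\<^sub>R (w - (1/2) *\<^sub>R (z + (b - b')))" for w
    by (simp add: algebra_simps)
  then have "norm (2 *\<^sub>R w - z - (b - b')) = 2 * dist ((1/2) *\<^sub>R (z + (b - b'))) w" for w
    by (simp add: dist_norm norm_minus_commute)
  ultimately show ?thesis by (auto simp: field_simps)
qed

text \<open>The balls of \<open>resolvent_constraint_eq_cball\<close> have the finite intersection property:
  the correspondence \<open>a + a' \<mapsto> a - a'\<close> on \<open>M\<close> is nonexpansive, so Kirszbraun's lemma applies.\<close>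

lemma monotone_set_one_point_extension:
  fixes M :: "('a::{real_inner,complete_space} \<times> 'a) set"
  assumes mono: "monotone_set M" and "M \<noteq> {}"
  shows "\<exists>w. \<forall>b b'. (b, b') \<in> M \<longrightarrow> inner (w - b) (z - w - b') \<ge> 0"
proof -
  define S where "S q = {w. inner (w - fst q) (z - w - snd q) \<ge> 0}" for q :: "'a \<times> 'a"
  have S_ball: "S q = cball ((1/2) *\<^sub>R (z + (fst q - snd q))) (norm (z - (fst q + snd q)) / 2)" for q
    unfolding S_def by (rule resolvent_constraint_eq_cball)
  obtain q0 where "q0 \<in> M" using \<open>M \<noteq> {}\<close> by blast
  have "\<Inter>(S ` M) \<noteq> {}"
  proof (rule Inter_closed_convex_nonempty)
    show "closed S' \<and> convex S'" if "S' \<in> S ` M" for S'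
      using that unfolding S_ball by auto
    show "S q0 \<in> S ` M" using \<open>q0 \<in> M\<close> by simp
    show "norm v \<le> norm ((1/2) *\<^sub>R (z + (fst q0 - snd q0))) + norm (z - (fst q0 + snd q0)) / 2"
      if "v \<in> S q0" for v
      using that norm_triangle_sub[of v "(1/2) *\<^sub>R (z + (fst q0 - snd q0))"]
      unfolding S_ball by (simp add: dist_norm norm_minus_commute)
    show "\<Inter>G \<noteq> {}" if G: "finite G" "G \<subseteq> S ` M" for G
    proof -
      obtain M' where "M' \<subseteq> M" "finite M'" and G: "G = S ` M'"
        using finite_subset_image[OF G] by blast
      have "norm ((fst q - snd q) - (fst q' - snd q')) \<le> norm ((fst q + snd q) - (fst q' + snd q'))"
        if "q \<in> M'" "q' \<in> M'" for q q'
        using monotone_set_cayley_nonexpansive[OF mono, of "fst q" "snd q" "fst q'" "snd q'"]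
          that \<open>M' \<subseteq> M\<close> by auto
      then obtain w' where w': "\<And>q. q \<in> M' \<Longrightarrow> norm (w' - (fst q - snd q)) \<le> norm (z - (fst q + snd q))"
        using kirszbraun_finite[OF \<open>finite M'\<close>, of "\<lambda>q. fst q - snd q" "\<lambda>q. fst q + snd q" z] by blast
      have "(1/2) *\<^sub>R (z + w') \<in> S q" if "q \<in> M'" for q
      proof -
        have "(1/2) *\<^sub>R (z + (fst q - snd q)) - (1/2) *\<^sub>R (z + w') = (1/2) *\<^sub>R ((fst q - snd q) - w')"
          by (simp add: algebra_simps)
        then have "dist ((1/2) *\<^sub>R (z + (fst q - snd q))) ((1/2) *\<^sub>R (z + w'))
            = norm (w' - (fst q - snd q)) / 2"
          by (simp add: dist_norm norm_minus_commute)
        then show ?thesis using w'[OF that] unfolding S_ball by simp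
      qed
      then show ?thesis unfolding G by blast
    qed
  qed
  then obtain w where "\<And>q. q \<in> M \<Longrightarrow> w \<in> S q" by blast
  then show ?thesis by (fastforce simp: S_def)
qed

text \<open>Minty's theorem: a maximal monotone extension (Zorn) admits every one-point extension,
  so \<open>I + M\<close> is onto.\<close>

lemma monotone_set_extends_to_full:
  fixes M0 :: "('a::{real_inner,complete_space} \<times> 'a) set"
  assumes "monotone_set M0" "M0 \<noteq> {}"
  shows "\<exists>M. M0 \<subseteq> M \<and> monotone_set M \<and> (\<forall>z. \<exists>w. (w, z - w) \<in> M)"
proof -
  define \<A> where "\<A> = {M. M0 \<subseteq> M \<and> monotone_set M}"
  have "\<exists>M\<in>\<A>. \<forall>X\<in>\<A>. M \<subseteq> X \<longrightarrow> X = M"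
  proof (rule subset_Zorn_nonempty)
    show "\<A> \<noteq> {}" using assms by (auto simp: \<A>_def)
    fix \<C> assume "\<C> \<noteq> {}" and chain: "subset.chain \<A> \<C>"
    have "monotone_set (\<Union>\<C>)"
    proof (rule monotone_setI)
      fix a a' b b' assume "(a, a') \<in> \<Union>\<C>" "(b, b') \<in> \<Union>\<C>"
      then obtain X where "X \<in> \<C>" "(a, a') \<in> X" "(b, b') \<in> X"
        using chain by (auto simp: subset_chain_def) (metis subsetD)
      moreover have "monotone_set X" using \<open>X \<in> \<C>\<close> chain by (auto simp: subset_chain_def \<A>_def)
      ultimately show "inner (a - b) (a' - b') \<ge> 0" using monotone_setD by blast
    qed
    moreover have "M0 \<subseteq> \<Union>\<C>"
      using \<open>\<C> \<noteq> {}\<close> chain unfolding subset_chain_def \<A>_def by blast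
    ultimately show "\<Union>\<C> \<in> \<A>" by (simp add: \<A>_def)
  qed
  then obtain M where "M \<in> \<A>" and maximal: "\<And>X. X \<in> \<A> \<Longrightarrow> M \<subseteq> X \<Longrightarrow> X = M" by blast
  then have "M0 \<subseteq> M" "monotone_set M" by (auto simp: \<A>_def)
  have "\<exists>w. (w, z - w) \<in> M" for z
  proof -
    obtain w where "\<forall>b b'. (b, b') \<in> M \<longrightarrow> inner (w - b) (z - w - b') \<ge> 0"
      using monotone_set_one_point_extension[OF \<open>monotone_set M\<close>] \<open>M0 \<subseteq> M\<close> assms(2) by blast
    then have "monotone_set (insert (w, z - w) M)"
      by (intro monotone_set_insert[OF \<open>monotone_set M\<close>]) blast
    then have "insert (w, z - w) M \<in> \<A>" using \<open>M0 \<subseteq> M\<close> by (auto simp: \<A>_def)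
    then show ?thesis using maximal by blast
  qed
  with \<open>M0 \<subseteq> M\<close> \<open>monotone_set M\<close> show ?thesis by blast
qed

lemma monotone_set_resolvent_unique:
  assumes "monotone_set M" "(w, z - w) \<in> M" "(w', z - w') \<in> M"
  shows "w = w'"
proof -
  have "inner (w - w') ((z - w) - (z - w')) \<ge> 0" using monotone_setD assms by blast
  moreover have "inner (w - w') ((z - w) - (z - w')) = - (norm (w - w'))\<^sup>2"
    by (simp add: power2_norm_eq_inner inner_diff_left inner_diff_right inner_commute)
  ultimately show ?thesis by simp
qed

lemma monotone_set_resolvent_firmly_nonexpansive:
  assumes "monotone_set M" and "\<And>z. (T z, z - T z) \<in> M"
  shows "firmly_nonexpansive T"
  unfolding firmly_nonexpansive_def
proof (intro allI)
  fix a b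
  have "inner (T a - T b) ((a - T a) - (b - T b)) \<ge> 0" using monotone_setD assms by blast
  moreover have "inner (T a - T b) ((a - T a) - (b - T b)) = inner (a - b) (T a - T b) - (norm (T a - T b))\<^sup>2"
    by (simp add: power2_norm_eq_inner inner_diff_left inner_diff_right inner_commute)
  ultimately show "(norm (T a - T b))\<^sup>2 \<le> inner (a - b) (T a - T b)" by simp
qed

lemma averaged_contraction_bound:
  fixes e D :: "'a::real_inner" and \<gamma> :: real
  assumes "0 < \<gamma>" "\<gamma> \<le> 1/2" and firm: "(norm D)\<^sup>2 \<le> inner e D"
  shows "norm ((1 - \<gamma>\<^sup>2) *\<^sub>R e - (\<gamma> * (1 - \<gamma>)) *\<^sub>R D) \<le> (1 - \<gamma>\<^sup>2) * norm e"
proof -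
  define \<alpha> \<beta> where "\<alpha> = 1 - \<gamma>\<^sup>2" and "\<beta> = \<gamma> * (1 - \<gamma>)"
  have "\<gamma>\<^sup>2 \<le> 1" using assms(1,2) by (simp add: power_le_one)
  moreover have "\<beta> = \<gamma> - \<gamma>\<^sup>2" by (simp add: \<beta>_def power2_eq_square algebra_simps)
  ultimately have "\<alpha> \<ge> 0" "\<beta> \<le> 2 * \<alpha>" using assms(2) by (auto simp: \<alpha>_def)
  have "\<beta> \<ge> 0" using assms(1,2) by (simp add: \<beta>_def)
  have "(norm (\<alpha> *\<^sub>R e - \<beta> *\<^sub>R D))\<^sup>2
      = \<alpha>\<^sup>2 * (norm e)\<^sup>2 - 2 * (\<alpha> * \<beta>) * inner e D + \<beta>\<^sup>2 * (norm D)\<^sup>2"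
    by (simp add: power2_norm_diff power_mult_distrib)
  also have "\<dots> \<le> \<alpha>\<^sup>2 * (norm e)\<^sup>2 - 2 * (\<alpha> * \<beta>) * (norm D)\<^sup>2 + \<beta>\<^sup>2 * (norm D)\<^sup>2"
    using mult_left_mono[OF firm, of "2 * (\<alpha> * \<beta>)"] \<open>\<alpha> \<ge> 0\<close> \<open>\<beta> \<ge> 0\<close> by simp
  also have "\<dots> = (\<alpha> * norm e)\<^sup>2 - \<beta> * (2 * \<alpha> - \<beta>) * (norm D)\<^sup>2"
    by (simp add: power2_eq_square algebra_simps)
  also have "\<dots> \<le> (\<alpha> * norm e)\<^sup>2"
    using \<open>\<beta> \<ge> 0\<close> \<open>\<beta> \<le> 2 * \<alpha>\<close> by simp
  finally show ?thesis
    using \<open>\<alpha> \<ge> 0\<close> by (simp add: \<alpha>_def \<beta>_def power2_le_iff_abs_le)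
qed

text \<open>For firmly nonexpansive \<open>T\<close> the averaged map \<open>\<gamma> I + (1 - \<gamma>) T\<close> is onto: \<open>c\<close> is attained
  at the fixed point of the contraction \<open>z \<mapsto> z - \<gamma> (\<gamma> z + (1 - \<gamma>) T z - c)\<close>.\<close>

lemma firmly_nonexpansive_averaged_surj:
  fixes T :: "'a::{real_inner,complete_space} \<Rightarrow> 'a"
  assumes "firmly_nonexpansive T" "0 < \<gamma>" "\<gamma> \<le> 1/2"
  shows "\<exists>z. \<gamma> *\<^sub>R z + (1 - \<gamma>) *\<^sub>R T z = c"
proof -
  define S where "S z = z - \<gamma> *\<^sub>R (\<gamma> *\<^sub>R z + (1 - \<gamma>) *\<^sub>R T z - c)" for z
  have "S a - S b = (1 - \<gamma>\<^sup>2) *\<^sub>R (a - b) - (\<gamma> * (1 - \<gamma>)) *\<^sub>R (T a - T b)" for a b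
    by (simp add: S_def power2_eq_square algebra_simps)
  moreover have "(norm (T a - T b))\<^sup>2 \<le> inner (a - b) (T a - T b)" for a b
    using assms(1) by (simp add: firmly_nonexpansive_def)
  ultimately have "\<forall>a b. dist (S a) (S b) \<le> (1 - \<gamma>\<^sup>2) * dist a b"
    unfolding dist_norm by (metis averaged_contraction_bound[OF assms(2,3)])
  moreover have "0 \<le> 1 - \<gamma>\<^sup>2" "1 - \<gamma>\<^sup>2 < 1"
    using assms(2,3) by (auto simp: power2_eq_square mult_le_one)
  ultimately obtain z where "S z = z" using banach_fix_type by blast
  then have "\<gamma> *\<^sub>R (\<gamma> *\<^sub>R z + (1 - \<gamma>) *\<^sub>R T z - c) = 0" by (simp add: S_def)
  then show ?thesis using assms(2) by auto
qed

section \<open>Asymptotically orthogonal sequences\<close>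

lemma norm_sum_almost_orthogonal_sq:
  fixes v :: "nat \<Rightarrow> 'a::real_inner"
  assumes "\<delta> \<ge> 0" and "\<And>i. i < N \<Longrightarrow> norm (v i) \<le> 1"
    and "\<And>i j. i < N \<Longrightarrow> j < N \<Longrightarrow> i \<noteq> j \<Longrightarrow> \<bar>inner (v i) (v j)\<bar> \<le> \<delta>"
  shows "(norm (\<Sum>i<N. v i))\<^sup>2 \<le> N + N\<^sup>2 * \<delta>"
proof -
  have "inner (v i) (v j) \<le> (if i = j then 1 else 0) + \<delta>" if "i < N" "j < N" for i j
  proof (cases "i = j")
    case True
    have "inner (v i) (v i) = (norm (v i))\<^sup>2" by (simp add: power2_norm_eq_inner)
    also have "\<dots> \<le> 1" using assms(2)[OF that(1)] by (simp add: power_le_one)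
    finally show ?thesis using True \<open>\<delta> \<ge> 0\<close> by simp
  next
    case False
    then show ?thesis using assms(3)[OF that False] by simp
  qed
  then have "(\<Sum>i<N. \<Sum>j<N. inner (v i) (v j)) \<le> (\<Sum>i<N. \<Sum>j<N. (if i = j then 1 else 0) + \<delta>)"
    by (intro sum_mono) auto
  moreover have "(norm (\<Sum>i<N. v i))\<^sup>2 = (\<Sum>i<N. \<Sum>j<N. inner (v i) (v j))"
    by (simp only: power2_norm_eq_inner inner_sum_left) (simp add: inner_sum_right)
  ultimately show ?thesis by (simp add: sum.distrib power2_eq_square algebra_simps)
qed

lemma almost_orthogonal_subseq:
  fixes v :: "nat \<Rightarrow> 'a::real_inner"
  assumes orth: "\<And>i. (\<lambda>k. inner (v i) (v k)) \<longlonglongrightarrow> 0"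
    and "\<delta> > 0" and frequently: "\<And>K. \<exists>k\<ge>K. P k"
  obtains g :: "nat \<Rightarrow> nat"
  where "\<And>i. P (g i)" "\<And>i j. i \<noteq> j \<Longrightarrow> \<bar>inner (v (g i)) (v (g j))\<bar> \<le> \<delta>"
proof -
  have "\<exists>k>a. P k \<and> (\<forall>m\<le>a. \<bar>inner (v m) (v k)\<bar> \<le> \<delta>)" for a
  proof -
    have "\<forall>\<^sub>F k in sequentially. \<bar>inner (v m) (v k)\<bar> < \<delta>" for m
      using order_tendstoD(2)[OF tendsto_rabs_zero[OF orth[of m]] \<open>\<delta> > 0\<close>] by simp
    then have "\<forall>\<^sub>F k in sequentially. \<forall>m\<in>{..a}. \<bar>inner (v m) (v k)\<bar> < \<delta>"
      by (intro eventually_ball_finite) auto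
    then obtain K where K: "\<And>k m. k \<ge> K \<Longrightarrow> m \<le> a \<Longrightarrow> \<bar>inner (v m) (v k)\<bar> < \<delta>"
      unfolding eventually_sequentially by auto
    obtain k where "k \<ge> max K (Suc a)" "P k" using frequently by blast
    then show ?thesis using K[of k] by (intro exI[of _ k]) (auto intro: less_imp_le)
  qed
  then obtain g where g: "\<And>i. P (g i)"
    and g_next: "\<And>i. g i < g (Suc i) \<and> (\<forall>m\<le>g i. \<bar>inner (v m) (v (g (Suc i)))\<bar> \<le> \<delta>)"
    using dependent_nat_choice[of "\<lambda>_ k. P k" "\<lambda>_ a k. a < k \<and> (\<forall>m\<le>a. \<bar>inner (v m) (v k)\<bar> \<le> \<delta>)"]
      frequently by blast
  have "strict_mono g" using g_next by (intro strict_monoI_Suc) auto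
  have "\<bar>inner (v (g j)) (v (g i))\<bar> \<le> \<delta>" if "j < i" for i j
  proof -
    obtain i' where i': "i = Suc i'" using \<open>j < i\<close> by (cases i) auto
    then have "g j \<le> g i'" using \<open>j < i\<close> \<open>strict_mono g\<close> by (simp add: strict_mono_less_eq)
    then show ?thesis using g_next[of i'] i' by auto
  qed
  then have "\<bar>inner (v (g i)) (v (g j))\<bar> \<le> \<delta>" if "i \<noteq> j" for i j
    using that by (metis inner_commute nat_neq_iff)
  with g show thesis by (rule that)
qed

text \<open>If \<open>\<langle>v k, y\<rangle> \<ge> \<epsilon>\<close> infinitely often, summing \<open>N\<close> nearly orthogonal such terms gives
  a vector of norm \<open>O(\<surd>N)\<close> whose inner product with \<open>y\<close> is at least \<open>N \<epsilon>\<close>.\<close>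

lemma almost_orthogonal_not_frequently_large:
  fixes v :: "nat \<Rightarrow> 'a::real_inner"
  assumes bounded: "\<And>k. norm (v k) \<le> 1"
    and orth: "\<And>i. (\<lambda>k. inner (v i) (v k)) \<longlonglongrightarrow> 0"
    and "\<epsilon> > 0" and frequently: "\<And>K. \<exists>k\<ge>K. inner (v k) y \<ge> \<epsilon>"
  shows False
proof -
  obtain N0 :: nat where "real N0 > 2 * (norm y)\<^sup>2 / \<epsilon>\<^sup>2" using reals_Archimedean2 by blast
  define N where "N = Suc N0"
  then have N: "real N > 2 * (norm y)\<^sup>2 / \<epsilon>\<^sup>2" "N \<ge> 1"
    using \<open>real N0 > 2 * (norm y)\<^sup>2 / \<epsilon>\<^sup>2\<close> by auto
  have "1 / real N > 0" using N(2) by simp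
  then obtain g :: "nat \<Rightarrow> nat" where g: "\<And>i. inner (v (g i)) y \<ge> \<epsilon>"
    and g_orth: "\<And>i j. i \<noteq> j \<Longrightarrow> \<bar>inner (v (g i)) (v (g j))\<bar> \<le> 1 / N"
    using almost_orthogonal_subseq[OF orth _ frequently] by blast
  define S where "S = (\<Sum>i<N. v (g i))"
  have "N * \<epsilon> \<le> inner S y"
    using sum_mono[of "{..<N}" "\<lambda>_. \<epsilon>" "\<lambda>i. inner (v (g i)) y"] g
    by (simp add: S_def inner_sum_left)
  also have "\<dots> \<le> norm S * norm y" by (rule norm_cauchy_schwarz)
  finally have "(N * \<epsilon>)\<^sup>2 \<le> (norm S)\<^sup>2 * (norm y)\<^sup>2"
    using \<open>\<epsilon> > 0\<close> by (metis power_mono power_mult_distrib mult_nonneg_nonneg of_nat_0_le_iff less_imp_le)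
  also have "(norm S)\<^sup>2 \<le> real N + (real N)\<^sup>2 * (1 / real N)"
    unfolding S_def using bounded g_orth by (intro norm_sum_almost_orthogonal_sq) simp_all
  finally have "N * (N * \<epsilon>\<^sup>2) \<le> N * (2 * (norm y)\<^sup>2)"
    using N(2) by (simp add: power2_eq_square algebra_simps mult_right_mono)
  then have "N * \<epsilon>\<^sup>2 \<le> 2 * (norm y)\<^sup>2" using N(2) by simp
  then show False using N(1) \<open>\<epsilon> > 0\<close> by (simp add: field_simps)
qed

lemma almost_orthogonal_weakly_null:
  fixes v :: "nat \<Rightarrow> 'a::real_inner"
  assumes bounded: "\<And>k. norm (v k) \<le> 1"
    and orth: "\<And>i. (\<lambda>k. inner (v i) (v k)) \<longlonglongrightarrow> 0"
  shows "(\<lambda>k. inner (v k) y) \<longlonglongrightarrow> 0"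
proof (rule ccontr)
  assume "\<not> ?thesis"
  then obtain \<epsilon> where "\<epsilon> > 0" and large: "\<And>K. \<exists>k\<ge>K. \<bar>inner (v k) y\<bar> \<ge> \<epsilon>"
    unfolding LIMSEQ_def dist_real_def by (auto simp: not_less)
  show False
  proof (cases "\<forall>K. \<exists>k\<ge>K. inner (v k) y \<ge> \<epsilon>")
    case True
    then show False
      using almost_orthogonal_not_frequently_large[OF bounded orth \<open>\<epsilon> > 0\<close>] by blast
  next
    case False
    then obtain K0 where "\<forall>k\<ge>K0. \<not> inner (v k) y \<ge> \<epsilon>" by blast
    then have K0: "\<And>k. k \<ge> K0 \<Longrightarrow> inner (v k) y < \<epsilon>" by (simp add: not_le)
    have "\<exists>k\<ge>K. inner (v k) (- y) \<ge> \<epsilon>" for K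
    proof -
      obtain k where "k \<ge> max K K0" "\<bar>inner (v k) y\<bar> \<ge> \<epsilon>" using large by blast
      then show ?thesis using K0[of k] by (intro exI[of _ k]) auto
    qed
    then show False
      using almost_orthogonal_not_frequently_large[OF bounded orth \<open>\<epsilon> > 0\<close>] by blast
  qed
qed

lemma null_sequence_attains_Sup:
  fixes f :: "nat \<Rightarrow> real"
  assumes "f \<longlonglongrightarrow> 0" and "f m > 0"
  shows "\<exists>k. \<forall>n. f n \<le> f k"
proof -
  obtain K where K: "\<And>n. n \<ge> K \<Longrightarrow> f n < f m"
    using order_tendstoD(2)[OF assms] unfolding eventually_sequentially by blast
  have "Max (f ` {..max K m}) \<in> f ` {..max K m}" by (intro Max_in) auto
  then obtain k where "Max (f ` {..max K m}) = f k" by blast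
  then have k_max: "f n \<le> f k" if "n \<le> max K m" for n
    using Max_ge[of "f ` {..max K m}" "f n"] that by simp
  have "f n \<le> f k" for n
  proof (cases "n \<le> max K m")
    case False
    then have "f n < f m" using K by simp
    then show ?thesis using k_max[of m] by simp
  qed (rule k_max)
  then show ?thesis by blast
qed

section \<open>The Gaussian orbit\<close>

lemma exp_add_exp_neg_le_2:
  fixes p q :: real
  assumes "0 \<le> p" "p \<le> 1/32" and q: "q \<ge> p + 32 * p\<^sup>2"
  shows "exp p + exp (- q) \<le> 2"
proof -
  have "p\<^sup>2 \<le> p / 32" using mult_left_mono[of p "1/32" p] assms(1,2) by (simp add: power2_eq_square)
  then have "q \<ge> 0" "1 - p - p\<^sup>2 > 0" "30 - 33 * p - 32 * p\<^sup>2 \<ge> 0"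
    using assms by (auto intro: order_trans[OF _ q])
  have "exp p \<le> 1 + p + p\<^sup>2" using exp_bound[of p] assms(1,2) by simp
  moreover have "exp (- q) \<le> 1 / (1 + q)"
    using exp_ge_add_one_self[of q] \<open>q \<ge> 0\<close> by (simp add: exp_minus inverse_eq_divide frac_le)
  moreover have "1 \<le> (1 - p - p\<^sup>2) * (1 + p + 32 * p\<^sup>2)"
  proof -
    have "(1 - p - p\<^sup>2) * (1 + p + 32 * p\<^sup>2) = 1 + p\<^sup>2 * (30 - 33 * p - 32 * p\<^sup>2)"
      by (simp add: power2_eq_square algebra_simps)
    then show ?thesis using \<open>30 - 33 * p - 32 * p\<^sup>2 \<ge> 0\<close> by simp
  qed
  then have "1 \<le> (1 - p - p\<^sup>2) * (1 + q)"
    using q \<open>1 - p - p\<^sup>2 > 0\<close> by (smt (verit) mult_left_mono)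
  then have "1 / (1 + q) \<le> 1 - p - p\<^sup>2" using \<open>q \<ge> 0\<close> by (simp add: field_simps)
  ultimately show ?thesis by linarith
qed

locale gaussian_orbit =
  fixes u :: "real \<Rightarrow> 'a::{real_inner, complete_space}"
    and d t \<rho> :: "nat \<Rightarrow> real"
    and x :: "nat \<Rightarrow> 'a"
  assumes u_inner: "\<And>s r. s \<ge> 0 \<Longrightarrow> r \<ge> 0 \<Longrightarrow> inner (u s) (u r) = exp (- (s - r)\<^sup>2)"
    and d_pos: "\<And>n. n \<ge> 1 \<Longrightarrow> d n > 0"
    and t_def: "\<And>n. t n = (\<Sum>k = 1..<n. d k)"
    and t_top: "filterlim t at_top sequentially"
    and d1: "d 1 \<le> 1/8"
    and d_dec: "\<And>n. n \<ge> 1 \<Longrightarrow> d (Suc n) \<le> d n / (1 + 64 * (d n)\<^sup>2)"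
    and rho1: "\<rho> 1 = 1"
    and rho_Suc: "\<And>n. n \<ge> 1 \<Longrightarrow> \<rho> (Suc n) = \<rho> n * exp (- (d n)\<^sup>2)"
    and x_def: "\<And>n. n \<ge> 1 \<Longrightarrow> x n = \<rho> n *\<^sub>R u (t n)"
begin

lemma t_Suc: "n \<ge> 1 \<Longrightarrow> t (Suc n) = t n + d n"
  by (simp add: t_def)

lemma t_mono: "m \<le> n \<Longrightarrow> t m \<le> t n"
  unfolding t_def using d_pos by (intro sum_mono2) (auto simp: less_imp_le)

lemma t_nonneg: "t n \<ge> 0"
  using t_mono[of 0 n] by (simp add: t_def)

text \<open>The decay condition on \<open>d\<close> says \<open>1 / d (n + 1) \<ge> 1 / d n + 64 d n\<close>; summed up, it
  controls \<open>1 / d\<close> by the elapsed time \<open>t\<close>.\<close>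

lemma inverse_d_ge:
  assumes "1 \<le> m" "m \<le> n"
  shows "1 / d m + 64 * (t n - t m) \<le> 1 / d n"
  using assms(2)
proof (induction n rule: dec_induct)
  case (step n)
  have n: "n \<ge> 1" using step.hyps assms(1) by simp
  have "1 / d n + 64 * d n = (1 + 64 * (d n)\<^sup>2) / d n"
    using d_pos[OF n] by (simp add: field_simps power2_eq_square)
  also have "\<dots> \<le> 1 / d (Suc n)"
    using d_dec[OF n] d_pos[OF n] d_pos[of "Suc n"]
    by (simp add: field_simps add_pos_nonneg)
  finally show ?case using step.IH t_Suc[OF n] by simp
qed simp

lemma inverse_d_ge_t: "n \<ge> 1 \<Longrightarrow> 8 + 64 * t n \<le> 1 / d n"
proof -
  assume "n \<ge> 1"
  have "8 \<le> 1 / d 1" using d1 d_pos[of 1] by (simp add: field_simps)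
  moreover have "t 1 = 0" by (simp add: t_def)
  ultimately show ?thesis using inverse_d_ge[OF order_refl \<open>n \<ge> 1\<close>] by (smt (verit))
qed

lemma d_le: "n \<ge> 1 \<Longrightarrow> d n \<le> 1/8"
  using inverse_d_ge_t[of n] mult_nonneg_nonneg[OF less_imp_le[OF d_pos] t_nonneg, of n n] d_pos[of n]
  by (simp add: field_simps)

lemma d_mult_t_le: "n \<ge> 1 \<Longrightarrow> d n * t (Suc n) \<le> 1/64"
proof -
  assume n: "n \<ge> 1"
  have "d n * (8 + 64 * t n) \<le> 1" using inverse_d_ge_t[OF n] d_pos[OF n] by (simp add: field_simps)
  moreover have "d n * d n \<le> d n * (1/8)" using d_le[OF n] d_pos[OF n] by simp
  ultimately show ?thesis using t_Suc[OF n] by (simp add: algebra_simps)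
qed

lemma d_ge_gap:
  assumes "1 \<le> m" "m \<le> n"
  shows "d m \<ge> d n + 64 * (d n)\<^sup>2 * (t (Suc n) - t (Suc m))"
proof -
  have pos: "d m > 0" "d n > 0" using assms d_pos by auto
  have "64 * (t n - t m) \<le> 1 / d n - 1 / d m" using inverse_d_ge[OF assms] by simp
  also have "\<dots> = (d m - d n) / (d m * d n)" using pos by (simp add: field_simps)
  finally have gap: "64 * (t n - t m) * (d m * d n) \<le> d m - d n"
    using pos by (simp add: field_simps)
  have "t n - t m \<ge> 0" using t_mono[OF assms(2)] by simp
  then have "d n \<le> d m" using gap pos by (smt (verit) mult_nonneg_nonneg)
  then have "t (Suc n) - t (Suc m) \<le> t n - t m"
    using t_Suc[of n] t_Suc[OF assms(1)] assms by simp
  then have "64 * (d n)\<^sup>2 * (t (Suc n) - t (Suc m)) \<le> 64 * (d n * d n) * (t n - t m)"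
    by (simp add: power2_eq_square mult_left_mono)
  also have "\<dots> \<le> 64 * (d m * d n) * (t n - t m)"
    using \<open>d n \<le> d m\<close> \<open>t n - t m \<ge> 0\<close> pos by (intro mult_right_mono) auto
  finally show ?thesis using gap by (simp add: algebra_simps)
qed

lemma rho_pos: "n \<ge> 1 \<Longrightarrow> \<rho> n > 0"
  by (induction n rule: nat_induct_at_least) (simp_all add: rho1[unfolded One_nat_def] rho_Suc)

lemma rho_eq_exp: "n \<ge> 1 \<Longrightarrow> \<rho> n = exp (- (\<Sum>k = 1..<n. (d k)\<^sup>2))"
  by (induction n rule: nat_induct_at_least) (simp_all add: rho1[unfolded One_nat_def] rho_Suc exp_add[symmetric])

lemma rho_le_1: "n \<ge> 1 \<Longrightarrow> \<rho> n \<le> 1"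
  by (simp add: rho_eq_exp sum_nonneg)

lemma norm_u: "s \<ge> 0 \<Longrightarrow> norm (u s) = 1"
  using u_inner[of s s] by (simp add: norm_eq_sqrt_inner)

lemma inner_x: "i \<ge> 1 \<Longrightarrow> j \<ge> 1 \<Longrightarrow> inner (x i) (x j) = \<rho> i * \<rho> j * exp (- (t i - t j)\<^sup>2)"
  using u_inner[OF t_nonneg t_nonneg] by (simp add: x_def)

lemma norm_x: "i \<ge> 1 \<Longrightarrow> norm (x i) = \<rho> i"
  using norm_u[OF t_nonneg] rho_pos[of i] by (simp add: x_def)

lemma norm_x_le_1: "i \<ge> 1 \<Longrightarrow> norm (x i) \<le> 1"
  using norm_x rho_le_1 by simp

lemma inner_x_Suc_step: "k \<ge> 1 \<Longrightarrow> inner (x (Suc k)) (x k - x (Suc k)) = 0"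
  using inner_x[of "Suc k" k] inner_x[of "Suc k" "Suc k"] rho_Suc[of k] t_Suc[of k]
  by (simp add: inner_diff_right)

lemma inner_orbit_steps_eq:
  assumes "1 \<le> m" "1 \<le> n"
  defines "s \<equiv> t (Suc n) - t (Suc m)"
  shows "inner (x (Suc m) - x (Suc n)) ((x m - x (Suc m)) - (x n - x (Suc n)))
    = \<rho> (Suc m) * \<rho> (Suc n) * exp (- s\<^sup>2) * (2 - exp (2 * d n * s) - exp (- (2 * d m * s)))"
proof -
  define R where "R = \<rho> (Suc m) * \<rho> (Suc n)"
  have shift: "\<rho> k = \<rho> (Suc k) * exp ((d k)\<^sup>2)" "t k = t (Suc k) - d k" if "k \<ge> 1" for k
    using rho_Suc[OF that] t_Suc[OF that] by (simp_all add: exp_minus field_simps)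
  have m_n: "inner (x (Suc m)) (x n) = R * exp (- s\<^sup>2) * exp (2 * d n * s)"
    using inner_x[of "Suc m" n] assms(2) shift[OF assms(2)]
    by (simp add: R_def s_def mult_exp_exp power2_eq_square algebra_simps)
  have n_m: "inner (x (Suc n)) (x m) = R * exp (- s\<^sup>2) * exp (- (2 * d m * s))"
    using inner_x[of "Suc n" m] assms(1) shift[OF assms(1)]
    by (simp add: R_def s_def mult_exp_exp power2_eq_square algebra_simps)
  have m_n': "inner (x (Suc m)) (x (Suc n)) = R * exp (- s\<^sup>2)"
    using inner_x[of "Suc m" "Suc n"] by (simp add: R_def s_def power2_commute)
  have "inner (x (Suc m) - x (Suc n)) ((x m - x (Suc m)) - (x n - x (Suc n)))
      = 2 * inner (x (Suc m)) (x (Suc n)) - inner (x (Suc m)) (x n) - inner (x (Suc n)) (x m)"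
    using inner_x_Suc_step[OF assms(1)] inner_x_Suc_step[OF assms(2)]
    by (simp add: inner_diff_left inner_diff_right inner_commute)
  then show ?thesis unfolding m_n n_m m_n' by (simp add: R_def algebra_simps)
qed

lemma inner_orbit_steps_nonneg:
  assumes "1 \<le> m" "1 \<le> n"
  shows "inner (x (Suc m) - x (Suc n)) ((x m - x (Suc m)) - (x n - x (Suc n))) \<ge> 0"
proof -
  have "inner (x (Suc m) - x (Suc n)) ((x m - x (Suc m)) - (x n - x (Suc n))) \<ge> 0"
    if "1 \<le> m" "m \<le> n" for m n
  proof -
    define s where "s = t (Suc n) - t (Suc m)"
    have "s \<ge> 0" using t_mono[of "Suc m" "Suc n"] that by (simp add: s_def)
    have "2 * d n * s \<le> 2 * (d n * t (Suc n))"
      using d_pos[of n] t_nonneg[of "Suc m"] that by (simp add: s_def mult_left_mono)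
    also have "\<dots> \<le> 1/32" using d_mult_t_le[of n] that by simp
    finally have "exp (2 * d n * s) + exp (- (2 * d m * s)) \<le> 2"
    proof (rule exp_add_exp_neg_le_2[rotated])
      show "0 \<le> 2 * d n * s" using d_pos[of n] \<open>s \<ge> 0\<close> that by simp
      have "2 * d m * s \<ge> 2 * (d n + 64 * (d n)\<^sup>2 * s) * s"
        using d_ge_gap[OF that] \<open>s \<ge> 0\<close> by (simp add: s_def mult_right_mono)
      then show "2 * d n * s + 32 * (2 * d n * s)\<^sup>2 \<le> 2 * d m * s"
        by (simp add: power2_eq_square algebra_simps)
    qed
    then show ?thesis
      using inner_orbit_steps_eq[of m n] that rho_pos[of "Suc m"] rho_pos[of "Suc n"]
      by (simp add: s_def)
  qed
  moreover have "inner (x (Suc m) - x (Suc n)) ((x m - x (Suc m)) - (x n - x (Suc n)))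
      = inner (x (Suc n) - x (Suc m)) ((x n - x (Suc n)) - (x m - x (Suc m)))"
    by (simp add: inner_diff_left inner_diff_right)
  ultimately show ?thesis using assms nat_le_linear[of m n] by metis
qed

lemma x_weakly_null: "(\<lambda>k. inner (x k) y) \<longlonglongrightarrow> 0"
proof -
  have orth: "(\<lambda>k. inner (u (t i)) (u (t k))) \<longlonglongrightarrow> 0" for i
  proof -
    have far: "filterlim (\<lambda>k. t k - t i) at_top sequentially"
      using filterlim_tendsto_add_at_top[OF tendsto_const t_top, of "- t i"] by simp
    then have "\<forall>\<^sub>F k in sequentially. t k - t i \<ge> 1" by (simp add: filterlim_at_top)
    then have "\<forall>\<^sub>F k in sequentially. norm (exp (- (t i - t k)\<^sup>2)) \<le> exp (- (t k - t i))"
    proof (rule eventually_mono)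
      fix k assume "t k - t i \<ge> 1"
      then have "(t k - t i) * 1 \<le> (t k - t i) * (t k - t i)" by (intro mult_left_mono) auto
      moreover have "(t i - t k)\<^sup>2 = (t k - t i) * (t k - t i)"
        by (simp add: power2_eq_square algebra_simps)
      ultimately show "norm (exp (- (t i - t k)\<^sup>2)) \<le> exp (- (t k - t i))" by simp
    qed
    moreover have "filterlim (\<lambda>k. - (t k - t i)) at_bot sequentially"
      using far by (simp add: filterlim_uminus_at_top)
    then have "(\<lambda>k. exp (- (t k - t i))) \<longlonglongrightarrow> 0" by (rule filterlim_compose[OF exp_at_bot])
    ultimately have "(\<lambda>k. exp (- (t i - t k)\<^sup>2)) \<longlonglongrightarrow> 0" by (rule Lim_null_comparison)
    then show ?thesis using u_inner[OF t_nonneg t_nonneg] by simp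
  qed
  have lim: "(\<lambda>k. inner (u (t k)) y) \<longlonglongrightarrow> 0"
    using norm_u[OF t_nonneg] orth by (intro almost_orthogonal_weakly_null) auto
  have "\<forall>\<^sub>F k in sequentially. norm (inner (x k) y) \<le> \<bar>inner (u (t k)) y\<bar>"
  proof (rule eventually_sequentiallyI[of 1])
    fix k :: nat assume "k \<ge> 1"
    then have "\<bar>\<rho> k\<bar> \<le> 1" using rho_pos[of k] rho_le_1[of k] by simp
    then show "norm (inner (x k) y) \<le> \<bar>inner (u (t k)) y\<bar>"
      using \<open>k \<ge> 1\<close> by (simp add: x_def abs_mult mult_left_le_one_le)
  qed
  then show ?thesis using tendsto_rabs_zero[OF lim] by (rule Lim_null_comparison)
qed

definition orbit_hull :: "'a set" where
  "orbit_hull = closure (convex hull {x n | n. n \<ge> 2})"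

lemma closed_orbit_hull: "closed orbit_hull"
  by (simp add: orbit_hull_def)

lemma convex_orbit_hull: "convex orbit_hull"
  by (simp add: orbit_hull_def convex_closure)

lemma x_in_orbit_hull: "n \<ge> 2 \<Longrightarrow> x n \<in> orbit_hull"
  unfolding orbit_hull_def by (rule subsetD[OF closure_subset], rule hull_inc) auto

lemma orbit_hull_subset:
  assumes "closed S" "convex S" "\<And>n. n \<ge> 2 \<Longrightarrow> x n \<in> S"
  shows "orbit_hull \<subseteq> S"
  unfolding orbit_hull_def using assms by (intro closure_minimal hull_minimal) auto

lemma orbit_hull_halfspace:
  assumes "\<And>n. n \<ge> 2 \<Longrightarrow> inner a (x n) \<le> b" and "y \<in> orbit_hull"
  shows "inner a y \<le> b"
  using orbit_hull_subset[of "{y. inner a y \<le> b}"] assms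
  by (auto simp: closed_halfspace_le convex_halfspace_le)

lemma norm_le_1_if_in_orbit_hull: "y \<in> orbit_hull \<Longrightarrow> norm y \<le> 1"
  using orbit_hull_subset[of "cball 0 1"] norm_x_le_1 by auto

lemma zero_in_orbit_hull: "0 \<in> orbit_hull"
proof -
  obtain p where "p \<in> orbit_hull" and nearest: "\<And>v. v \<in> orbit_hull \<Longrightarrow> norm (0 - p) \<le> norm (0 - v)"
    using nearest_point_exists[OF closed_orbit_hull convex_orbit_hull, of 0] x_in_orbit_hull[of 2]
    by auto
  have "(norm p)\<^sup>2 \<le> inner (x n) p" if "n \<ge> 2" for n
    using nearest_point_inner_le[OF convex_orbit_hull \<open>p \<in> orbit_hull\<close> x_in_orbit_hull[OF that] nearest]
    by (simp add: inner_diff_right power2_norm_eq_inner inner_commute)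
  then have "(norm p)\<^sup>2 \<le> 0"
    using LIMSEQ_le_const[OF x_weakly_null[of p], of "(norm p)\<^sup>2"] by blast
  then show ?thesis using \<open>p \<in> orbit_hull\<close> by simp
qed

text \<open>The graph prescribed for \<open>T\<^sup>-\<^sup>1 - I\<close> by the orbit \<open>T (x k) = x (k + 1)\<close> and \<open>T 0 = 0\<close>.\<close>

definition orbit_graph :: "('a \<times> 'a) set" where
  "orbit_graph = insert (0, 0) {(x (Suc k), x k - x (Suc k)) | k. k \<ge> 1}"

lemma orbit_graph_in_hull: "(b, b') \<in> orbit_graph \<Longrightarrow> b \<in> orbit_hull"
  unfolding orbit_graph_def using x_in_orbit_hull zero_in_orbit_hull by auto

lemma monotone_orbit_graph: "monotone_set orbit_graph"
proof (rule monotone_setI)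
  have zero: "inner (x (Suc k) - 0) ((x k - x (Suc k)) - 0) \<ge> 0" "inner (0 - x (Suc k)) (0 - (x k - x (Suc k))) \<ge> 0"
    if "k \<ge> 1" for k
    using inner_x_Suc_step[OF that] by (simp_all add: inner_diff_left inner_diff_right)
  fix a a' b b' assume "(a, a') \<in> orbit_graph" "(b, b') \<in> orbit_graph"
  then show "inner (a - b) (a' - b') \<ge> 0"
    unfolding orbit_graph_def using zero inner_orbit_steps_nonneg by auto
qed

text \<open>A linear functional attains its maximum over \<open>orbit_hull\<close> at a first component of
  \<open>orbit_graph\<close>, because \<open>x n\<close> tends weakly to \<open>0 \<in> fst ` orbit_graph\<close>.\<close>

lemma orbit_graph_supporting_point:
  "\<exists>q q'. (q, q') \<in> orbit_graph \<and> (\<forall>y\<in>orbit_hull. inner a y \<le> inner a q)"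
proof (cases "\<forall>n. inner a (x (n + 2)) \<le> 0")
  case True
  then have "inner a y \<le> inner a 0" if "y \<in> orbit_hull" for y
    using orbit_hull_halfspace[OF _ that, of a 0] by (metis le_add_diff_inverse2 inner_zero_right)
  then show ?thesis by (auto simp: orbit_graph_def)
next
  case False
  then obtain m where "inner a (x (m + 2)) > 0" by (auto simp: not_le)
  moreover have "(\<lambda>n. inner a (x (n + 2))) \<longlonglongrightarrow> 0"
    using LIMSEQ_ignore_initial_segment[OF x_weakly_null[of a], of 2] by (simp add: inner_commute)
  ultimately obtain k where k: "\<And>n. inner a (x (n + 2)) \<le> inner a (x (k + 2))"
    using null_sequence_attains_Sup by blast
  have "inner a y \<le> inner a (x (k + 2))" if "y \<in> orbit_hull" for y
    using orbit_hull_halfspace[OF _ that] k by (metis le_add_diff_inverse2)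
  moreover have "(x (Suc (Suc k)), x (Suc k) - x (Suc (Suc k))) \<in> orbit_graph"
    by (auto simp: orbit_graph_def)
  ultimately show ?thesis by auto
qed

text \<open>Adding the normal cone of \<open>orbit_hull\<close> forces the resolvents of all monotone extensions
  to take values in \<open>orbit_hull\<close>.\<close>

definition orbit_graph_cone :: "('a \<times> 'a) set" where
  "orbit_graph_cone = {(b, b' + v) | b b' v. (b, b') \<in> orbit_graph \<and> (\<forall>y\<in>orbit_hull. inner v (y - b) \<le> 0)}"

lemma orbit_graph_subset_cone: "orbit_graph \<subseteq> orbit_graph_cone"
  unfolding orbit_graph_cone_def by force

lemma monotone_orbit_graph_cone: "monotone_set orbit_graph_cone"
proof (rule monotone_setI)
  fix a c b e
  assume "(a, c) \<in> orbit_graph_cone" "(b, e) \<in> orbit_graph_cone"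
  then obtain a' v b' w where a: "(a, a') \<in> orbit_graph" "\<forall>y\<in>orbit_hull. inner v (y - a) \<le> 0" "c = a' + v"
    and b: "(b, b') \<in> orbit_graph" "\<forall>y\<in>orbit_hull. inner w (y - b) \<le> 0" "e = b' + w"
    unfolding orbit_graph_cone_def by blast
  have "inner (a - b) (a' - b') \<ge> 0" using monotone_orbit_graph a(1) b(1) by (rule monotone_setD)
  moreover have "inner v (b - a) \<le> 0" "inner w (a - b) \<le> 0"
    using a(2) b(2) orbit_graph_in_hull a(1) b(1) by blast+
  moreover have "inner (a - b) (c - e) = inner (a - b) (a' - b') - inner v (b - a) - inner w (a - b)"
    by (simp add: a(3) b(3) inner_diff_left inner_diff_right inner_add_right inner_commute)
  ultimately show "inner (a - b) (c - e) \<ge> 0" by linarith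
qed

lemma resolvent_in_orbit_hull:
  assumes mono: "monotone_set M" and "orbit_graph_cone \<subseteq> M" and wz: "(w, z - w) \<in> M"
  shows "w \<in> orbit_hull"
proof (rule ccontr)
  assume "w \<notin> orbit_hull"
  obtain p where "p \<in> orbit_hull" and nearest: "\<And>v. v \<in> orbit_hull \<Longrightarrow> norm (w - p) \<le> norm (w - v)"
    using nearest_point_exists[OF closed_orbit_hull convex_orbit_hull, of w] x_in_orbit_hull[of 2]
    by auto
  define v where "v = w - p"
  have "v \<noteq> 0" using \<open>w \<notin> orbit_hull\<close> \<open>p \<in> orbit_hull\<close> by (auto simp: v_def)
  have below_p: "inner v y \<le> inner v p" if "y \<in> orbit_hull" for y
    using nearest_point_inner_le[OF convex_orbit_hull \<open>p \<in> orbit_hull\<close> that nearest]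
    by (simp add: v_def inner_diff_right)
  obtain q q' where q: "(q, q') \<in> orbit_graph" and below_q: "\<And>y. y \<in> orbit_hull \<Longrightarrow> inner v y \<le> inner v q"
    using orbit_graph_supporting_point[of v] by blast
  have "inner v q = inner v p"
    using below_p[OF orbit_graph_in_hull[OF q]] below_q[OF \<open>p \<in> orbit_hull\<close>] by simp
  define A where "A = inner (w - q) (z - w - q')"
  define \<tau> where "\<tau> = (\<bar>A\<bar> + 1) / (norm v)\<^sup>2"
  have "\<tau> \<ge> 0" by (simp add: \<tau>_def)
  have "\<forall>y\<in>orbit_hull. inner (\<tau> *\<^sub>R v) (y - q) \<le> 0"
    using below_q \<open>\<tau> \<ge> 0\<close> by (simp add: inner_diff_right mult_left_mono)
  then have "(q, q' + \<tau> *\<^sub>R v) \<in> M"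
    using q assms(2) unfolding orbit_graph_cone_def by blast
  then have "inner (w - q) ((z - w) - (q' + \<tau> *\<^sub>R v)) \<ge> 0" by (rule monotone_setD[OF mono wz])
  moreover have "inner (w - q) v = (norm v)\<^sup>2"
    using \<open>inner v q = inner v p\<close>
    by (simp add: v_def power2_norm_eq_inner inner_diff_left inner_diff_right inner_commute)
  then have "inner (w - q) ((z - w) - (q' + \<tau> *\<^sub>R v)) = A - \<tau> * (norm v)\<^sup>2"
    by (simp add: A_def inner_diff_right inner_add_right)
  moreover have "\<tau> * (norm v)\<^sup>2 = \<bar>A\<bar> + 1" using \<open>v \<noteq> 0\<close> by (simp add: \<tau>_def)
  ultimately show False by linarith
qed

text \<open>On the orbit, firm nonexpansiveness and \<open>\<langle>x (k + 1), x k - x (k + 1)\<rangle> = 0\<close> make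
  \<open>\<langle>z, x k\<rangle>\<close> nondecreasing in \<open>k\<close> for a fixed point \<open>z\<close>; as it tends to \<open>0\<close>, \<open>z\<close> lies in a
  halfspace \<open>\<langle>z, _\<rangle> \<le> 0\<close> containing \<open>orbit_hull\<close>.\<close>

lemma orbit_fixed_point_eq_0:
  assumes firm: "firmly_nonexpansive T" and orbit: "\<And>n. n \<ge> 1 \<Longrightarrow> T (x n) = x (Suc n)"
    and "z \<in> orbit_hull" "T z = z"
  shows "z = 0"
proof -
  have "inner z (x k) \<le> inner z (x (Suc k))" if "k \<ge> 1" for k
  proof -
    have "(norm (z - x (Suc k)))\<^sup>2 \<le> inner (z - x k) (z - x (Suc k))"
      using firm \<open>T z = z\<close> orbit[OF that] unfolding firmly_nonexpansive_def by metis
    then show ?thesis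
      using inner_x_Suc_step[OF that]
      by (simp add: power2_norm_eq_inner inner_diff_left inner_diff_right inner_commute)
  qed
  then have "incseq (\<lambda>k. inner z (x (Suc k)))" by (intro incseq_SucI) simp
  moreover have "(\<lambda>k. inner z (x (Suc k))) \<longlonglongrightarrow> 0"
    using LIMSEQ_Suc[OF x_weakly_null[of z]] by (simp add: inner_commute)
  ultimately have le_0: "inner z (x (Suc k)) \<le> 0" for k by (rule incseq_le)
  then have "inner z (x n) \<le> 0" if "n \<ge> 2" for n
    using that by (cases n) auto
  then have "inner z z \<le> 0" using orbit_hull_halfspace \<open>z \<in> orbit_hull\<close> by blast
  then have "inner z z = 0" using inner_ge_zero[of z] by linarith
  then show ?thesis by simp
qed

text \<open>If \<open>\<gamma> z + (1 - \<gamma>) T z = c\<close>, then \<open>c - T z = \<gamma> (z - T z)\<close>, and firm nonexpansiveness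
  against the orbit points bounds \<open>\<langle>c - T z, x m - T z\<rangle>\<close> by \<open>O(\<gamma>)\<close>; for \<open>c \<in> orbit_hull\<close>
  this makes \<open>T z\<close> \<open>O(\<surd>\<gamma>)\<close>-close to \<open>c\<close>.\<close>

lemma averaged_point_inner_orbit_le:
  assumes firm: "firmly_nonexpansive T" and orbit: "\<And>n. n \<ge> 1 \<Longrightarrow> T (x n) = x (Suc n)"
    and "0 < \<gamma>" and c: "\<gamma> *\<^sub>R z + (1 - \<gamma>) *\<^sub>R T z = c" and "m \<ge> 2"
  shows "inner (c - T z) (x m) \<le> inner (c - T z) (T z) + 2 * \<gamma> * (norm (T z) + 1)"
proof -
  define y where "y = T z"
  obtain n where n: "m = Suc n" "n \<ge> 1" using \<open>m \<ge> 2\<close> by (cases m) auto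
  have "(norm (y - x m))\<^sup>2 \<le> inner (z - x n) (y - x m)"
    using firm orbit[OF n(2)] unfolding firmly_nonexpansive_def y_def n(1) by metis
  then have "inner (x n - x m) (y - x m) \<le> inner (z - y) (y - x m)"
    by (simp add: power2_norm_eq_inner inner_diff_left inner_diff_right inner_commute)
  moreover have "c - y = \<gamma> *\<^sub>R (z - y)" using c by (simp add: y_def algebra_simps)
  ultimately have "\<gamma> * inner (x n - x m) (y - x m) \<le> inner (c - y) (y - x m)"
    using \<open>0 < \<gamma>\<close> by (simp add: mult_left_mono)
  moreover have "\<bar>inner (x n - x m) (y - x m)\<bar> \<le> 2 * (norm y + 1)"
  proof -
    have "norm (x n - x m) \<le> 2" "norm (y - x m) \<le> norm y + 1"
      using norm_triangle_ineq4[of "x n" "x m"] norm_triangle_ineq4[of y "x m"]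
        norm_x_le_1[of n] norm_x_le_1[of m] n by auto
    then have "norm (x n - x m) * norm (y - x m) \<le> 2 * (norm y + 1)"
      by (intro mult_mono) auto
    then show ?thesis using Cauchy_Schwarz_ineq2[of "x n - x m" "y - x m"] by linarith
  qed
  then have "\<gamma> * (- inner (x n - x m) (y - x m)) \<le> \<gamma> * (2 * (norm y + 1))"
    using \<open>0 < \<gamma>\<close> by (intro mult_left_mono) auto
  then have "- (2 * \<gamma> * (norm y + 1)) \<le> \<gamma> * inner (x n - x m) (y - x m)"
    by (simp add: algebra_simps)
  ultimately show ?thesis by (simp add: y_def inner_diff_right)
qed

lemma averaged_point_near:
  assumes firm: "firmly_nonexpansive T" and orbit: "\<And>n. n \<ge> 1 \<Longrightarrow> T (x n) = x (Suc n)"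
    and "c \<in> orbit_hull" "0 < \<gamma>" "\<gamma> \<le> 1/2" and c: "\<gamma> *\<^sub>R z + (1 - \<gamma>) *\<^sub>R T z = c"
  shows "(norm (c - T z))\<^sup>2 \<le> 10 * \<gamma>"
proof -
  define y e where "y = T z" and "e = norm (c - T z)"
  have "inner (c - y) c \<le> inner (c - y) y + 2 * \<gamma> * (norm y + 1)"
    using orbit_hull_halfspace[OF averaged_point_inner_orbit_le[OF firm orbit \<open>0 < \<gamma>\<close> c]]
      \<open>c \<in> orbit_hull\<close> by (simp add: y_def)
  then have e_sq: "e\<^sup>2 \<le> 2 * \<gamma> * (norm y + 1)"
    by (simp add: e_def y_def power2_norm_eq_inner inner_diff_left inner_diff_right inner_commute)
  have "norm y \<le> 1 + e"
    using norm_triangle_ineq4[of c "c - y"] norm_le_1_if_in_orbit_hull[OF \<open>c \<in> orbit_hull\<close>]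
    by (simp add: e_def y_def)
  then have "2 * \<gamma> * (norm y + 1) \<le> 2 * \<gamma> * (2 + e)" using \<open>0 < \<gamma>\<close> by (intro mult_left_mono) auto
  with e_sq have "e\<^sup>2 \<le> 2 * \<gamma> * (2 + e)" by linarith
  moreover have "\<gamma> * (2 * e) \<le> \<gamma> * (1 + e\<^sup>2)"
    using \<open>0 < \<gamma>\<close> sum_squares_bound[of e 1] by (intro mult_left_mono) (auto simp: power2_eq_square)
  moreover have "e\<^sup>2 * (1/2) \<le> e\<^sup>2 * (1 - \<gamma>)" using \<open>\<gamma> \<le> 1/2\<close> by (intro mult_left_mono) auto
  ultimately show ?thesis by (simp add: e_def algebra_simps)
qed

lemma orbit_hull_subset_closure_range:
  assumes firm: "firmly_nonexpansive T" and orbit: "\<And>n. n \<ge> 1 \<Longrightarrow> T (x n) = x (Suc n)"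
  shows "orbit_hull \<subseteq> closure (range T)"
proof
  fix c assume "c \<in> orbit_hull"
  show "c \<in> closure (range T)"
    unfolding closure_approachable
  proof (intro allI impI)
    fix \<epsilon> :: real assume "\<epsilon> > 0"
    define \<gamma> where "\<gamma> = min (1/2) (\<epsilon>\<^sup>2 / 20)"
    have "0 < \<gamma>" "\<gamma> \<le> 1/2" using \<open>\<epsilon> > 0\<close> by (auto simp: \<gamma>_def)
    then obtain z where "\<gamma> *\<^sub>R z + (1 - \<gamma>) *\<^sub>R T z = c"
      using firmly_nonexpansive_averaged_surj[OF firm] by blast
    then have "(norm (c - T z))\<^sup>2 \<le> 10 * \<gamma>"
      using averaged_point_near[OF firm orbit \<open>c \<in> orbit_hull\<close> \<open>0 < \<gamma>\<close> \<open>\<gamma> \<le> 1/2\<close>] by blast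
    also have "\<dots> < \<epsilon>\<^sup>2"
      using \<open>\<epsilon> > 0\<close> min.cobounded2[of "1/2" "\<epsilon>\<^sup>2 / 20"] zero_less_power[of \<epsilon> 2]
      unfolding \<gamma>_def by linarith
    finally have "dist (T z) c < \<epsilon>"
      using \<open>\<epsilon> > 0\<close> by (simp add: dist_norm norm_minus_commute power_less_imp_less_base)
    then show "\<exists>y\<in>range T. dist y c < \<epsilon>" by blast
  qed
qed

lemma firmly_nonexpansive_orbit_extension:
  "\<exists>T. firmly_nonexpansive T \<and> closure (range T) = orbit_hull \<and> {z. T z = z} = {0}
     \<and> (\<forall>n\<ge>1. T (x n) = x (Suc n))"
proof -
  obtain M where "orbit_graph_cone \<subseteq> M" "monotone_set M" and full: "\<And>z. \<exists>w. (w, z - w) \<in> M"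
    using monotone_set_extends_to_full[OF monotone_orbit_graph_cone] orbit_graph_subset_cone
    by (auto simp: orbit_graph_def)
  define T where "T z = (SOME w. (w, z - w) \<in> M)" for z
  have T_M: "(T z, z - T z) \<in> M" for z unfolding T_def by (rule someI_ex[OF full])
  have T_eq: "T z = w" if "(w, z - w) \<in> M" for z w
    using monotone_set_resolvent_unique[OF \<open>monotone_set M\<close> T_M that] .
  have firm: "firmly_nonexpansive T"
    using \<open>monotone_set M\<close> T_M by (rule monotone_set_resolvent_firmly_nonexpansive)
  have orbit: "T (x n) = x (Suc n)" if "n \<ge> 1" for n
    using that orbit_graph_subset_cone \<open>orbit_graph_cone \<subseteq> M\<close> by (intro T_eq) (auto simp: orbit_graph_def)
  have "T 0 = 0"
    using orbit_graph_subset_cone \<open>orbit_graph_cone \<subseteq> M\<close> by (intro T_eq) (auto simp: orbit_graph_def)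
  have range: "T z \<in> orbit_hull" for z
    using resolvent_in_orbit_hull[OF \<open>monotone_set M\<close> \<open>orbit_graph_cone \<subseteq> M\<close> T_M] .
  then have "closure (range T) \<subseteq> orbit_hull"
    using closed_orbit_hull by (intro closure_minimal) auto
  then have "closure (range T) = orbit_hull"
    using orbit_hull_subset_closure_range[OF firm orbit] by blast
  moreover have "z = 0" if "T z = z" for z
    using range[of z] that by (intro orbit_fixed_point_eq_0[OF firm orbit]) auto
  then have "{z. T z = z} = {0}" using \<open>T 0 = 0\<close> by auto
  ultimately show ?thesis using firm orbit by blast
qed

lemma INF_norm_x_Suc:
  assumes summable: "summable (\<lambda>k. (d (Suc k))\<^sup>2)"
  shows "(INF n\<in>{1..}. norm (x (Suc n))) = exp (- (\<Sum>k. (d (Suc k))\<^sup>2))"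
proof -
  define P where "P n = (\<Sum>k<n. (d (Suc k))\<^sup>2)" for n
  have shift: "(\<Sum>k = 1..<Suc n. (d k)\<^sup>2) = P n" for n
    unfolding P_def by (induction n) auto
  have norm_eq: "norm (x (Suc n)) = exp (- P n)" for n
  proof -
    have "norm (x (Suc n)) = \<rho> (Suc n)" by (rule norm_x) simp
    also have "\<dots> = exp (- (\<Sum>k = 1..<Suc n. (d k)\<^sup>2))" by (rule rho_eq_exp) simp
    finally show ?thesis by (simp only: shift)
  qed
  have lower: "exp (- (\<Sum>k. (d (Suc k))\<^sup>2)) \<le> exp (- P n)" for n
    using sum_le_suminf[OF summable, of "{..<n}"] by (simp add: P_def)
  have "(\<lambda>n. exp (- P n)) \<longlonglongrightarrow> exp (- (\<Sum>k. (d (Suc k))\<^sup>2))"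
    unfolding P_def by (intro tendsto_intros summable_LIMSEQ[OF summable])
  moreover have "(INF n\<in>{1..}. exp (- P n)) \<le> exp (- P n)" if "n \<ge> 1" for n
    using that lower by (intro cINF_lower bdd_belowI2[where m = "exp (- (\<Sum>k. (d (Suc k))\<^sup>2))"]) auto
  ultimately have "(INF n\<in>{1..}. exp (- P n)) \<le> exp (- (\<Sum>k. (d (Suc k))\<^sup>2))"
    by (intro LIMSEQ_le_const) auto
  moreover have "exp (- (\<Sum>k. (d (Suc k))\<^sup>2)) \<le> (INF n\<in>{1..}. exp (- P n))"
    using lower by (intro cINF_greatest) auto
  ultimately show ?thesis unfolding norm_eq by (rule antisym)
qed

end

theorem theorem7p1:
  fixes u :: "real \<Rightarrow> 'a::{real_inner, complete_space}"
    and d t \<rho> :: "nat \<Rightarrow> real"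
    and \<rho>inf :: real
    and x :: "nat \<Rightarrow> 'a"
  assumes infdim: "infinite_dimensional TYPE('a)"
    and u_inner: "\<And>s r. s \<ge> 0 \<Longrightarrow> r \<ge> 0 \<Longrightarrow> inner (u s) (u r) = exp (- (s - r)\<^sup>2)"
    and d_pos: "\<And>n. n \<ge> 1 \<Longrightarrow> d n > 0"
    and d_sq_summable: "summable (\<lambda>k. (d (Suc k))\<^sup>2)"
    and t_def: "\<And>n. t n = (\<Sum>k = 1..<n. d k)"
    and t_top: "filterlim t at_top sequentially"
    and d1: "d 1 \<le> 1/8"
    and d_dec: "\<And>n. n \<ge> 1 \<Longrightarrow> d (Suc n) \<le> d n / (1 + 64 * (d n)\<^sup>2)"
    and rho1: "\<rho> 1 = 1"
    and rho_Suc: "\<And>n. n \<ge> 1 \<Longrightarrow> \<rho> (Suc n) = \<rho> n * exp (- (d n)\<^sup>2)"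
    and rhoinf_def: "\<rho>inf = exp (- (\<Sum>k. (d (Suc k))\<^sup>2))"
    and x_def: "\<And>n. n \<ge> 1 \<Longrightarrow> x n = \<rho> n *\<^sub>R u (t n)"
  shows "\<exists>T :: 'a \<Rightarrow> 'a.
           firmly_nonexpansive T
         \<and> closure (range T) = closure (convex hull {x n | n. n \<ge> 2})
         \<and> {z. T z = z} = {0}
         \<and> (\<forall>n\<ge>1. T (x n) = x (Suc n))
         \<and> weakly_tendsto (\<lambda>n. (T ^^ n) (x 1)) 0
         \<and> (INF n\<in>{1..}. norm ((T ^^ n) (x 1))) = \<rho>inf
         \<and> \<rho>inf > 0"
proof -
  interpret gaussian_orbit u d t \<rho> x
    using u_inner d_pos t_def t_top d1 d_dec rho1 rho_Suc x_def by unfold_locales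
  obtain T where T: "firmly_nonexpansive T" "closure (range T) = orbit_hull" "{z. T z = z} = {0}"
    "\<forall>n\<ge>1. T (x n) = x (Suc n)"
    using firmly_nonexpansive_orbit_extension by blast
  have iterate: "(T ^^ n) (x 1) = x (Suc n)" for n
    using T(4) by (induction n) auto
  have "weakly_tendsto (\<lambda>n. (T ^^ n) (x 1)) 0"
    unfolding weakly_tendsto_def iterate using LIMSEQ_Suc[OF x_weakly_null] by simp
  moreover have "(INF n\<in>{1..}. norm ((T ^^ n) (x 1))) = \<rho>inf"
    unfolding iterate rhoinf_def using d_sq_summable by (rule INF_norm_x_Suc)
  moreover have "\<rho>inf > 0" by (simp add: rhoinf_def)
  ultimately show ?thesis using T unfolding orbit_hull_def by blast
qed

end
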